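(* Let $\Omega$ be a compact metric space, $c\in C(\Omega\times\Omega)$ such that the optimal transport cost $\mathcal T_c$ is nonnegative and $\mathcal T_c(\mu,\mu)=0$ for all $\mu$. Let $f\colon[0,\infty)\to[0,\infty)$ be a finite strictly convex entropy function and $m$ a non-null finite positive Borel measure on $\Omega$. For $\mu\in\mathcal M_+(\Omega)$ let $\mathcal S(\mu)$ be the unique minimizer of $\nu\mapsto\mathcal T_c(\mu,\nu)+H_{f,m}(\nu)$ over $\mathcal M_+(\Omega)$, and let $\nu=\mathcal S(\mu)$. Let $C_0,C_1$ be two positive constants. Then \[ C_0\leq\frac{d\mu}{dm}\leq C_1\implies C_0\leq\frac{d\nu}{dm}\leq C_1. \]
   Context: $\mathcal M_+(\Omega)$ is the set of finite positive Borel measures. $\mathcal T_c(\mu,\nu)=\inf_{\pi\in\Pi(\mu,\nu)}\int c\,d\pi$ over positive measures $\pi$ on $\Omega\times\Omega$ with marginals $\mu,\nu$ ($+\infty$ if masses differ). An entropy function is a proper convex lower semicontinuous $f\colon[0,\infty)\to[0,\infty]$ with $f(s)/s\to\infty$. $H_{f,m}(\nu)=\int f(d\nu/dm)\,dm$ if $\nu\geq0$ and $\nu\ll m$, and $+\infty$ otherwise. Existence and uniqueness of the minimizer $\mathcal S(\mu)$ holds in this setting. The density conditions are understood $m$-a.e. (in particular the hypothesis includes $\mu\ll m$). *)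

theory Defs
  imports "HOL-Analysis.Analysis"
begin

definition Mplus :: "'a::topological_space measure set" where
  "Mplus = {M. sets M = sets borel \<and> finite_measure M}"

definition couplings :: "'a::metric_space measure \<Rightarrow> 'a measure \<Rightarrow> ('a \<times> 'a) measure set" where
  "couplings \<mu> \<nu> = {\<pi>. sets \<pi> = sets borel \<and> finite_measure \<pi> \<and>
      distr \<pi> borel fst = \<mu> \<and> distr \<pi> borel snd = \<nu>}"

text \<open>Optimal transport cost; the infimum over the empty set is +\<infinity>.\<close>
definition OT_cost :: "('a::metric_space \<times> 'a \<Rightarrow> real) \<Rightarrow> 'a measure \<Rightarrow> 'a measure \<Rightarrow> ereal" where
  "OT_cost c \<mu> \<nu> = (INF \<pi> \<in> couplings \<mu> \<nu>. ereal (integral\<^sup>L \<pi> c))"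

definition strict_convex_on :: "real set \<Rightarrow> (real \<Rightarrow> real) \<Rightarrow> bool" where
  "strict_convex_on S f \<longleftrightarrow> (\<forall>x\<in>S. \<forall>y\<in>S. \<forall>t. x \<noteq> y \<and> 0 < t \<and> t < 1 \<longrightarrow>
      f ((1 - t) * x + t * y) < (1 - t) * f x + t * f y)"

definition lsc_nonneg :: "(real \<Rightarrow> real) \<Rightarrow> bool" where
  "lsc_nonneg f \<longleftrightarrow> (\<forall>s\<ge>0. \<forall>e>0. \<exists>d>0. \<forall>t\<ge>0. \<bar>t - s\<bar> < d \<longrightarrow> f s - e < f t)"

definition finite_entropy_function :: "(real \<Rightarrow> real) \<Rightarrow> bool" where
  "finite_entropy_function f \<longleftrightarrow> (\<forall>s\<ge>0. 0 \<le> f s) \<and> convex_on {0..} f \<and> lsc_nonneg f \<and>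
      filterlim (\<lambda>s. f s / s) at_top at_top"

definition rel_entropy :: "(real \<Rightarrow> real) \<Rightarrow> 'a measure \<Rightarrow> 'a measure \<Rightarrow> ennreal" where
  "rel_entropy f m \<nu> = (if absolutely_continuous m \<nu>
      then (\<integral>\<^sup>+ x. ennreal (f (enn2real (RN_deriv m \<nu> x))) \<partial>m) else \<infinity>)"

end

theory Submission
  imports Defs
begin

text \<open>Write \<open>\<mu> = \<rho>\<mu> m\<close> and \<open>\<nu> = \<rho> m\<close>. If \<open>\<rho> > C1\<close> on a set of positive measure, take a nearly
  optimal plan \<open>\<pi>\<close> and let the fraction \<open>t\<close> of the mass that it sends to points where \<open>\<rho> > L\<close>
  stay at its source instead. Because \<open>T\<^sub>c \<ge> 0\<close> and \<open>T\<^sub>c(\<mu>', \<mu>') = 0\<close>, this costs no more than \<open>\<pi>\<close>.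
  The density becomes \<open>\<rho> - b + a\<close>, where \<open>b = t \<rho>\<close> is removed above \<open>L\<close>, at most \<open>a \<le> t C1\<close> is
  added, and \<open>\<integral> a = \<integral> b\<close>. By convexity the change of entropy is \<open>k (a - b)\<close> up to an error
  controlled by the gap between the right and left chord slopes of \<open>f\<close> at \<open>L\<close>. Choosing \<open>L\<close> and
  \<open>t\<close> makes this gap as small as we like, while strict convexity gives a fixed gain on the set
  where \<open>\<rho> \<ge> l > C1\<close>. So the entropy strictly decreases, contradicting minimality. The lower
  bound is symmetric: mass leaving points where \<open>\<rho> < L\<close> stays there.\<close>

section \<open>Chord slopes of convex functions\<close>

definition chord_slope :: "(real \<Rightarrow> real) \<Rightarrow> real \<Rightarrow> real \<Rightarrow> real" where
  "chord_slope f a b = (f b - f a) / (b - a)"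

lemma chord_slope_sym: "chord_slope f a b = chord_slope f b a"
  unfolding chord_slope_def by (metis minus_diff_eq minus_divide_divide)

lemma chord_slope_mult: "a \<noteq> b \<Longrightarrow> chord_slope f a b * (b - a) = f b - f a"
  by (simp add: chord_slope_def)

lemma convex_on_chord_slope_mono:
  assumes f: "convex_on I f" and I: "a \<in> I" "d \<in> I"
    and "a < b" "b \<le> d" "a \<le> c" "c < d"
  shows "chord_slope f a b \<le> chord_slope f c d"
proof -
  have "chord_slope f a b \<le> chord_slope f a d"
  proof (cases "b < d")
    case True
    then have "chord_slope f b a \<le> chord_slope f d a"
      using convex_on_slope_le(1)[OF f I, of b] assms unfolding chord_slope_def by simp
    then show ?thesis by (simp add: chord_slope_sym)
  qed (use assms in simp)
  also have "\<dots> \<le> chord_slope f c d"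
  proof (cases "a < c")
    case True
    then have "chord_slope f d a \<le> chord_slope f d c"
      using convex_on_slope_le(2)[OF f I, of c] assms unfolding chord_slope_def by simp
    then show ?thesis by (simp add: chord_slope_sym)
  qed (use assms in simp)
  finally show ?thesis .
qed

lemma strict_convex_on_chord_slope_less:
  assumes f: "strict_convex_on S f" and S: "x \<in> S" "z \<in> S" and "x < y" "y < z"
  shows "chord_slope f x y < chord_slope f y z"
proof -
  define \<theta> where "\<theta> = (y - x) / (z - x)"
  have \<theta>: "0 < \<theta>" "\<theta> < 1" "\<theta> * (z - x) = y - x"
    using assms by (auto simp: \<theta>_def field_simps)
  then have "(1 - \<theta>) * x + \<theta> * z = y"
    by (simp add: algebra_simps)
  moreover have "x \<noteq> z" using assms by simp
  ultimately have "f y < (1 - \<theta>) * f x + \<theta> * f z"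
    using f S \<theta>(1,2) unfolding strict_convex_on_def by metis
  then have "(z - x) * f y < (z - x) * ((1 - \<theta>) * f x + \<theta> * f z)"
    using assms by (intro mult_strict_left_mono) auto
  also have "\<dots> = (z - x - \<theta> * (z - x)) * f x + \<theta> * (z - x) * f z"
    by (simp add: algebra_simps)
  also have "\<dots> = (z - y) * f x + (y - x) * f z"
    using \<theta>(3) by simp
  finally have "(z - x) * f y < (z - y) * f x + (y - x) * f z" .
  then show ?thesis
    using \<open>x < y\<close> \<open>y < z\<close> by (simp add: chord_slope_def field_simps)
qed

lemma convex_on_increment_le:
  assumes f: "convex_on I f" and I: "r \<in> I" "L + e \<in> I"
    and "r \<le> L" "0 \<le> D" "D \<le> e"
  shows "f (r + D) - f r \<le> chord_slope f L (L + e) * D"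
proof (cases "D = 0")
  case False
  then have "chord_slope f r (r + D) \<le> chord_slope f L (L + e)"
    using assms by (intro convex_on_chord_slope_mono[OF f I]) auto
  then have "chord_slope f r (r + D) * D \<le> chord_slope f L (L + e) * D"
    using assms by (intro mult_right_mono) auto
  then show ?thesis
    using chord_slope_mult[of r "r + D" f] False by simp
qed simp

lemma convex_on_decrement_le:
  assumes f: "convex_on I f" and I: "a \<in> I" "r \<in> I"
    and "a < L" "L \<le> r" "a \<le> r - D" "0 \<le> D"
  shows "f (r - D) - f r \<le> - (chord_slope f a L * D)"
proof (cases "D = 0")
  case False
  then have "chord_slope f a L \<le> chord_slope f (r - D) r"
    using assms by (intro convex_on_chord_slope_mono[OF f I]) auto
  then have "chord_slope f a L * D \<le> chord_slope f (r - D) r * D"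
    using assms by (intro mult_right_mono) auto
  then show ?thesis
    using chord_slope_mult[of "r - D" r f] False by simp
qed simp

lemma chained_gaps_accumulate:
  fixes s k :: "nat \<Rightarrow> real"
  assumes gap: "\<And>i. i < n \<Longrightarrow> s i + \<eta> < k i"
    and chain: "\<And>i. Suc i < n \<Longrightarrow> k i \<le> s (Suc i)" and "i < n"
  shows "s 0 + real (Suc i) * \<eta> < k i"
  using \<open>i < n\<close>
proof (induction i)
  case 0
  then show ?case using gap by simp
next
  case (Suc i)
  then have "s 0 + real (Suc i) * \<eta> < s (Suc i)"
    using chain by (smt (verit) Suc_lessD)
  then show ?case using gap[OF Suc.prems] by (simp add: algebra_simps)
qed

text \<open>Slope jumps of size \<open>\<eta>\<close> across \<open>N\<close> consecutive disjoint cells in \<open>[p, q]\<close> add up, so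
  they cannot exceed the total increase of the slopes over \<open>[0, q + 1]\<close>.\<close>
lemma convex_on_slope_jumps_bounded:
  fixes L :: "nat \<Rightarrow> real"
  assumes f: "convex_on {0..} f" and "0 < N" "0 < p" "0 < t" "0 < C"
    and cells: "\<And>i. i < N \<Longrightarrow> p \<le> (1 - t) * L i \<and> (1 - t) * L i < L i \<and> L i + t * C \<le> q"
    and chain: "\<And>i. Suc i < N \<Longrightarrow> L i + t * C \<le> L (Suc i) \<and> L i \<le> (1 - t) * L (Suc i)"
    and jumps: "\<And>i. i < N \<Longrightarrow> chord_slope f ((1 - t) * L i) (L i) + \<eta> < chord_slope f (L i) (L i + t * C)"
  shows "real N * \<eta> < chord_slope f q (q + 1) - chord_slope f 0 p"
proof -
  define k where "k i = chord_slope f (L i) (L i + t * C)" for i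
  define s where "s i = chord_slope f ((1 - t) * L i) (L i)" for i
  have tC: "0 < t * C" using assms by simp
  have "k i \<le> s (Suc i)" if "Suc i < N" for i
    unfolding k_def s_def using cells[OF Suc_lessD[OF that]] cells[OF that] chain[OF that] tC \<open>0 < p\<close>
    by (intro convex_on_chord_slope_mono[OF f]) auto
  then have "s 0 + real N * \<eta> < k (N - 1)"
    using chained_gaps_accumulate[of N s \<eta> k "N - 1"] jumps \<open>0 < N\<close> by (simp add: k_def s_def)
  moreover have "k (N - 1) \<le> chord_slope f q (q + 1)"
    unfolding k_def using cells[of "N - 1"] \<open>0 < N\<close> \<open>0 < p\<close> tC
    by (intro convex_on_chord_slope_mono[OF f]) auto
  moreover have "chord_slope f 0 p \<le> s 0"
    unfolding s_def using cells[of 0] \<open>0 < N\<close> \<open>0 < p\<close>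
    by (intro convex_on_chord_slope_mono[OF f]) auto
  ultimately show ?thesis by linarith
qed

text \<open>A quantitative substitute for a point of differentiability of \<open>f\<close> in \<open>(p, q)\<close>.\<close>
lemma convex_on_chord_slopes_close:
  fixes f :: "real \<Rightarrow> real"
  assumes f: "convex_on {0..} f" and pq: "0 < p" "p < q" and C: "0 < C" and t0: "0 < t0"
    and \<eta>: "0 < \<eta>"
  obtains L t where "p < L" "L + t * C \<le> q" "p \<le> (1 - t) * L" "0 < t" "t \<le> t0" "t < 1"
    "chord_slope f L (L + t * C) \<le> chord_slope f ((1 - t) * L) L + \<eta>"
proof -
  obtain N :: nat where N: "chord_slope f q (q + 1) - chord_slope f 0 p < real N * \<eta>" "0 < N"
  proof -
    obtain n :: nat where "(chord_slope f q (q + 1) - chord_slope f 0 p) / \<eta> < real n"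
      using reals_Archimedean2 by blast
    then show ?thesis using that[of "Suc n"] \<eta> by (simp add: field_simps)
  qed
  define h where "h = (q - p) / (real N + 1)"
  define t where "t = min (t0 / 2) (h / (C + q))"
  define L where "L i = p + (real i + 1) * h" for i :: nat
  have h: "0 < h" using pq by (simp add: h_def)
  have "t \<le> h / (C + q)" by (simp add: t_def)
  then have "t * (C + q) \<le> h" using C pq by (simp add: pos_le_divide_eq)
  then have tCq: "t * C \<le> h" "t * q \<le> h" using C pq t0 h
    by (auto simp: t_def distrib_left intro: order_trans[rotated])
  have t: "0 < t" "t \<le> t0" using t0 h C pq by (auto simp: t_def)
  have Lq: "L i + h \<le> q" if "i < N" for i
  proof -
    have "L i + h = p + (real i + 2) * h" by (simp add: L_def algebra_simps)
    also have "\<dots> \<le> p + (real N + 1) * h"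
      using that h by (intro add_left_mono mult_right_mono) auto
    also have "\<dots> = q" by (simp add: h_def)
    finally show ?thesis .
  qed
  have tL: "t * L i \<le> h" if "i < N" for i
    using mult_left_mono[of "L i" q t] Lq[OF that] h t tCq by linarith
  have Lp: "p + h \<le> L i" for i using h by (simp add: L_def)
  have cell: "p < L i" "L i + t * C \<le> q" "p \<le> (1 - t) * L i" if "i < N" for i
    using Lp[of i] Lq[OF that] tL[OF that] tCq h by (auto simp: algebra_simps)
  have t1: "t < 1"
    using cell(1,3)[of 0] N pq by (smt (verit) mult_nonpos_nonneg)
  have "\<exists>i<N. chord_slope f (L i) (L i + t * C) \<le> chord_slope f ((1 - t) * L i) (L i) + \<eta>"
  proof (rule ccontr)
    assume "\<not> ?thesis"
    then have jumps: "chord_slope f ((1 - t) * L i) (L i) + \<eta> < chord_slope f (L i) (L i + t * C)"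
      if "i < N" for i
      using that by (auto simp: not_le)
    have cells: "p \<le> (1 - t) * L i \<and> (1 - t) * L i < L i \<and> L i + t * C \<le> q" if "i < N" for i
      using cell[OF that] pq t by (auto simp: algebra_simps)
    have "L i + t * C \<le> L (Suc i) \<and> L i \<le> (1 - t) * L (Suc i)" if "Suc i < N" for i
      using tCq tL[OF that] by (auto simp: L_def algebra_simps)
    then have "real N * \<eta> < chord_slope f q (q + 1) - chord_slope f 0 p"
      using convex_on_slope_jumps_bounded[where L = L, OF f N(2) pq(1) t(1) C cells _ jumps] by blast
    with N(1) show False by linarith
  qed
  then show ?thesis using that cell t t1 by blast
qed

text \<open>Moving the fraction \<open>t\<close> of the density \<open>r\<close> away where \<open>r > L\<close> and bringing back at
  most \<open>t C\<close>: the linear part is priced at the right slope \<open>k\<close> at \<open>L\<close>, the error comes from the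
  gap between \<open>k\<close> and the left slope at \<open>L\<close>, and above \<open>l\<close> the slopes exceed \<open>k\<close> by \<open>\<Gamma>\<close>.\<close>
lemma convex_reroute_pointwise_above:
  assumes cvx: "convex_on {0..} f" and C: "0 < C" "C < L" "L < l" and t: "0 < t" "t < 1"
    and close: "chord_slope f L (L + t * C) \<le> chord_slope f ((1 - t) * L) L + \<eta>"
    and steep: "chord_slope f L (L + t * C) + \<Gamma> \<le> chord_slope f ((1 - t) * l) l"
    and "0 \<le> \<eta>" "0 \<le> \<Gamma>" and r: "0 \<le> r" and a: "0 \<le> a" "a \<le> t * C"
  defines "k \<equiv> chord_slope f L (L + t * C)"
  shows "f (r - t * r * of_bool (L < r) + a) \<le> f r + k * (a - t * r * of_bool (L < r))
    + t * (\<eta> * r - \<Gamma> * (l - C) * of_bool (l \<le> r))"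
proof (cases "L < r")
  case False
  have "f (r + a) - f r \<le> k * a"
    unfolding k_def using False r a C t by (intro convex_on_increment_le[OF cvx]) auto
  moreover have "0 \<le> t * (\<eta> * r)" using t \<open>0 \<le> \<eta>\<close> r by simp
  ultimately show ?thesis using False C by auto
next
  case True
  define D where "D = t * r - a"
  have "t * C \<le> t * r" using True C t by (intro mult_left_mono) auto
  then have D: "0 \<le> D" "D \<le> t * r" using a by (auto simp: D_def)
  have eq: "r - t * r * of_bool (L < r) + a = r - D" "a - t * r * of_bool (L < r) = - D"
    using True by (auto simp: D_def)
  show ?thesis
  proof (cases "l \<le> r")
    case False
    have "(1 - t) * L \<le> (1 - t) * r" using True t by (intro mult_left_mono) auto
    then have "f (r - D) - f r \<le> - (chord_slope f ((1 - t) * L) L * D)"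
      using True t C D by (intro convex_on_decrement_le[OF cvx]) (auto simp: algebra_simps)
    moreover have "(k - chord_slope f ((1 - t) * L) L) * D \<le> \<eta> * (t * r)"
      using close D \<open>0 \<le> \<eta>\<close> by (intro mult_mono) (auto simp: k_def)
    ultimately show ?thesis unfolding eq using False by (simp add: algebra_simps)
  next
    case True
    have "(1 - t) * l \<le> (1 - t) * r" using True t by (intro mult_left_mono) auto
    then have "f (r - D) - f r \<le> - (chord_slope f ((1 - t) * l) l * D)"
      using True t C D by (intro convex_on_decrement_le[OF cvx]) (auto simp: algebra_simps)
    also have "\<dots> \<le> - ((k + \<Gamma>) * D)"
      using steep D by (simp add: k_def mult_right_mono)
    finally have "f (r - D) - f r \<le> - (k * D) - \<Gamma> * D" by (simp add: algebra_simps)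
    moreover have "t * l \<le> t * r" using True t by (intro mult_left_mono) auto
    then have "\<Gamma> * (t * (l - C)) \<le> \<Gamma> * D"
      using a \<open>0 \<le> \<Gamma>\<close> by (intro mult_left_mono) (auto simp: D_def right_diff_distrib)
    moreover have "0 \<le> t * (\<eta> * r)" using t \<open>0 \<le> \<eta>\<close> r by simp
    ultimately show ?thesis unfolding eq using True by (simp add: algebra_simps)
  qed
qed

text \<open>The gap \<open>\<Gamma>\<close> between slopes on two cells of \<open>(C, l)\<close> is fixed before \<open>\<eta>\<close>, which is then
  made small compared to it.\<close>
lemma strict_convex_reroute_estimate_above:
  assumes cvx: "convex_on {0..} f" and sc: "strict_convex_on {0..} f" and C: "0 < C" "C < l"
  shows "\<exists>\<Gamma>>0. \<forall>\<eta>>0. \<exists>L t k. 0 < t \<and> t < 1 \<and> (\<forall>r a. 0 \<le> r \<longrightarrow> 0 \<le> a \<longrightarrow> a \<le> t * C \<longrightarrow>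
    f (r - t * r * of_bool (L < r) + a) \<le> f r + k * (a - t * r * of_bool (L < r))
      + t * (\<eta> * r - \<Gamma> * (l - C) * of_bool (l \<le> r)))"
proof -
  define q1 where "q1 = C + (l - C) / 3"
  define q2 where "q2 = C + 2 * (l - C) / 3"
  have q: "C < q1" "q1 < q2" "q2 < l" using C by (auto simp: q1_def q2_def field_simps)
  define \<Gamma> where "\<Gamma> = chord_slope f q2 l - chord_slope f q1 q2"
  have \<Gamma>: "0 < \<Gamma>"
    unfolding \<Gamma>_def using strict_convex_on_chord_slope_less[OF sc, of q1 l q2] q C by simp
  have "\<exists>L t k. 0 < t \<and> t < 1 \<and> (\<forall>r a. 0 \<le> r \<longrightarrow> 0 \<le> a \<longrightarrow> a \<le> t * C \<longrightarrow>
    f (r - t * r * of_bool (L < r) + a) \<le> f r + k * (a - t * r * of_bool (L < r))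
      + t * (\<eta> * r - \<Gamma> * (l - C) * of_bool (l \<le> r)))" if \<eta>: "0 < \<eta>" for \<eta>
  proof -
    have "0 < (l - q2) / l" using q C by simp
    then obtain L t where L: "C < L" "L + t * C \<le> q1" "C \<le> (1 - t) * L"
      and t: "0 < t" "t \<le> (l - q2) / l" "t < 1"
      and close: "chord_slope f L (L + t * C) \<le> chord_slope f ((1 - t) * L) L + \<eta>"
      using convex_on_chord_slopes_close[OF cvx _ q(1) C(1) _ \<eta>] C by blast
    have tC: "0 < t * C" using t C by simp
    have "chord_slope f L (L + t * C) \<le> chord_slope f q1 q2"
      using L tC q C by (intro convex_on_chord_slope_mono[OF cvx]) auto
    moreover have "t * l \<le> l - q2" using t q C by (simp add: pos_le_divide_eq)
    then have "chord_slope f q2 l \<le> chord_slope f ((1 - t) * l) l"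
      using q C t by (intro convex_on_chord_slope_mono[OF cvx]) (auto simp: algebra_simps)
    ultimately have steep: "chord_slope f L (L + t * C) + \<Gamma> \<le> chord_slope f ((1 - t) * l) l"
      by (simp add: \<Gamma>_def)
    have "L < l" using L q tC by linarith
    note pointwise = convex_reroute_pointwise_above[OF cvx C(1) L(1) this t(1,3) close steep]
    have "\<forall>r a. 0 \<le> r \<longrightarrow> 0 \<le> a \<longrightarrow> a \<le> t * C \<longrightarrow>
      f (r - t * r * of_bool (L < r) + a) \<le> f r + chord_slope f L (L + t * C) * (a - t * r * of_bool (L < r))
        + t * (\<eta> * r - \<Gamma> * (l - C) * of_bool (l \<le> r))"
      using \<eta> \<Gamma> by (intro allI impI pointwise) auto
    with t show ?thesis by blast
  qed
  with \<Gamma> show ?thesis by blast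
qed

lemma convex_reroute_pointwise_below:
  assumes cvx: "convex_on {0..} f" and l: "0 \<le> l" "l < L" and t: "0 < t" "t < 1"
    and L: "L + t * C1 \<le> C0" and C1: "0 < C1"
    and close: "chord_slope f L (L + t * C1) \<le> chord_slope f ((1 - t) * L) L + \<eta>"
    and flat: "chord_slope f l (l + t * C1) + \<Gamma> \<le> chord_slope f ((1 - t) * L) L"
    and "0 \<le> \<eta>" "0 \<le> \<Gamma>" and r: "0 \<le> r" and q: "C0 \<le> q" "q \<le> C1" and b: "0 \<le> b" "b \<le> t * r"
  defines "s \<equiv> chord_slope f ((1 - t) * L) L"
  shows "f (r - b + t * q * of_bool (r < L)) \<le> f r + s * (t * q * of_bool (r < L) - b)
    + t * (\<eta> * C1 - \<Gamma> * (C0 - l) * of_bool (r \<le> l))"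
proof (cases "r < L")
  case False
  have "(1 - t) * L \<le> (1 - t) * r" using False t by (intro mult_left_mono) auto
  then have "f (r - b) - f r \<le> - (s * b)"
    unfolding s_def using False b t l r by (intro convex_on_decrement_le[OF cvx]) (auto simp: algebra_simps)
  moreover have "0 \<le> t * (\<eta> * C1)" using t \<open>0 \<le> \<eta>\<close> C1 by simp
  ultimately show ?thesis using False l by simp
next
  case True
  define D where "D = t * q - b"
  have "t * r \<le> t * q" using True L q mult_pos_pos[OF t(1) C1] t by (intro mult_left_mono) auto
  moreover have "t * q \<le> t * C1" using q t by (intro mult_left_mono) auto
  ultimately have D: "0 \<le> D" "D \<le> t * C1" using b by (auto simp: D_def)
  have eq: "r - b + t * q * of_bool (r < L) = r + D" "t * q * of_bool (r < L) - b = D"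
    using True by (auto simp: D_def)
  show ?thesis
  proof (cases "r \<le> l")
    case False
    have "f (r + D) - f r \<le> chord_slope f L (L + t * C1) * D"
      using True r D t C1 by (intro convex_on_increment_le[OF cvx]) auto
    moreover have "(chord_slope f L (L + t * C1) - s) * D \<le> \<eta> * (t * C1)"
      using close D \<open>0 \<le> \<eta>\<close> by (intro mult_mono) (auto simp: s_def)
    ultimately show ?thesis unfolding eq using False by (simp add: algebra_simps)
  next
    case True
    have "f (r + D) - f r \<le> chord_slope f l (l + t * C1) * D"
      using True r D l t C1 by (intro convex_on_increment_le[OF cvx]) auto
    also have "\<dots> \<le> (s - \<Gamma>) * D"
      using flat D by (simp add: s_def mult_right_mono)
    finally have "f (r + D) - f r \<le> s * D - \<Gamma> * D" by (simp add: algebra_simps)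
    moreover have "t * r \<le> t * l" "t * C0 \<le> t * q" using True q t by simp_all
    then have "\<Gamma> * (t * (C0 - l)) \<le> \<Gamma> * D"
      using b \<open>0 \<le> \<Gamma>\<close> by (intro mult_left_mono) (auto simp: D_def right_diff_distrib)
    moreover have "0 \<le> t * (\<eta> * C1)" using t \<open>0 \<le> \<eta>\<close> C1 by simp
    ultimately show ?thesis unfolding eq using True by (simp add: algebra_simps)
  qed
qed

lemma strict_convex_reroute_estimate_below:
  assumes cvx: "convex_on {0..} f" and sc: "strict_convex_on {0..} f"
    and l: "0 \<le> l" "l < C0" and C1: "0 < C1"
  shows "\<exists>\<Gamma>>0. \<forall>\<eta>>0. \<exists>L t s. 0 < t \<and> t < 1 \<and> (\<forall>r q b. 0 \<le> r \<longrightarrow> C0 \<le> q \<longrightarrow> q \<le> C1 \<longrightarrow>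
    0 \<le> b \<longrightarrow> b \<le> t * r \<longrightarrow>
    f (r - b + t * q * of_bool (r < L)) \<le> f r + s * (t * q * of_bool (r < L) - b)
      + t * (\<eta> * C1 - \<Gamma> * (C0 - l) * of_bool (r \<le> l)))"
proof -
  define d where "d = (C0 - l) / 3"
  define q2 where "q2 = l + d"
  define q3 where "q3 = l + 2 * d"
  have d: "0 < d" "q3 < C0" using l by (auto simp: d_def q3_def field_simps)
  have q: "l < q2" "q2 < q3" using d by (auto simp: q2_def q3_def)
  define \<Gamma> where "\<Gamma> = chord_slope f q2 q3 - chord_slope f l q2"
  have \<Gamma>: "0 < \<Gamma>"
    unfolding \<Gamma>_def using strict_convex_on_chord_slope_less[OF sc, of l q3 q2] q l by simp
  have "\<exists>L t s. 0 < t \<and> t < 1 \<and> (\<forall>r q b. 0 \<le> r \<longrightarrow> C0 \<le> q \<longrightarrow> q \<le> C1 \<longrightarrow>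
    0 \<le> b \<longrightarrow> b \<le> t * r \<longrightarrow>
    f (r - b + t * q * of_bool (r < L)) \<le> f r + s * (t * q * of_bool (r < L) - b)
      + t * (\<eta> * C1 - \<Gamma> * (C0 - l) * of_bool (r \<le> l)))" if \<eta>: "0 < \<eta>" for \<eta>
  proof -
    have "0 < q3" "0 < d / C1" using d C1 l q by auto
    then obtain L t where L: "q3 < L" "L + t * C1 \<le> C0" "q3 \<le> (1 - t) * L"
      and t: "0 < t" "t \<le> d / C1" "t < 1"
      and close: "chord_slope f L (L + t * C1) \<le> chord_slope f ((1 - t) * L) L + \<eta>"
      using convex_on_chord_slopes_close[OF cvx _ d(2) C1 _ \<eta>] by blast
    have tC: "0 < t * C1" "t * C1 \<le> d" using t C1 by (auto simp: pos_le_divide_eq)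
    have "chord_slope f l (l + t * C1) \<le> chord_slope f l q2"
      using tC q l by (intro convex_on_chord_slope_mono[OF cvx]) (auto simp: q2_def)
    moreover have "chord_slope f q2 q3 \<le> chord_slope f ((1 - t) * L) L"
      using q l L t by (intro convex_on_chord_slope_mono[OF cvx]) auto
    ultimately have flat: "chord_slope f l (l + t * C1) + \<Gamma> \<le> chord_slope f ((1 - t) * L) L"
      by (simp add: \<Gamma>_def)
    have "l < L" using L q by linarith
    note pointwise = convex_reroute_pointwise_below[OF cvx l(1) this t(1,3) L(2) C1 close flat]
    have "\<forall>r q b. 0 \<le> r \<longrightarrow> C0 \<le> q \<longrightarrow> q \<le> C1 \<longrightarrow> 0 \<le> b \<longrightarrow> b \<le> t * r \<longrightarrow>
      f (r - b + t * q * of_bool (r < L)) \<le> f r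
        + chord_slope f ((1 - t) * L) L * (t * q * of_bool (r < L) - b)
        + t * (\<eta> * C1 - \<Gamma> * (C0 - l) * of_bool (r \<le> l))"
      using \<eta> \<Gamma> by (intro allI impI pointwise) auto
    with t show ?thesis by blast
  qed
  with \<Gamma> show ?thesis by blast
qed

section \<open>Sums and densities of measures\<close>

definition add_measure :: "'a measure \<Rightarrow> 'a measure \<Rightarrow> 'a measure" where
  "add_measure M N = measure_of (space M) (sets M) (\<lambda>A. emeasure M A + emeasure N A)"

lemma sets_add_measure [simp, measurable_cong]: "sets (add_measure M N) = sets M"
  and space_add_measure [simp]: "space (add_measure M N) = space M"
  by (auto simp: add_measure_def)

lemma emeasure_add_measure:
  assumes sN: "sets N = sets M" and A: "A \<in> sets M"
  shows "emeasure (add_measure M N) A = emeasure M A + emeasure N A"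
  unfolding add_measure_def
proof (rule emeasure_measure_of_sigma)
  show "sigma_algebra (space M) (sets M)" ..
  show "positive (sets M) (\<lambda>A. emeasure M A + emeasure N A)"
    by (simp add: positive_def sN[symmetric])
  show "countably_additive (sets M) (\<lambda>A. emeasure M A + emeasure N A)"
  proof (rule countably_additiveI)
    fix A :: "nat \<Rightarrow> _" assume "range A \<subseteq> sets M" "disjoint_family A"
    then show "(\<Sum>i. emeasure M (A i) + emeasure N (A i)) = emeasure M (\<Union>i. A i) + emeasure N (\<Union>i. A i)"
      by (simp add: suminf_add[symmetric] suminf_emeasure sN)
  qed
qed fact

lemma nn_integral_add_measure:
  assumes sN: "sets N = sets M" and g: "g \<in> borel_measurable M"
  shows "(\<integral>\<^sup>+x. g x \<partial>add_measure M N) = (\<integral>\<^sup>+x. g x \<partial>M) + (\<integral>\<^sup>+x. g x \<partial>N)"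
  using g
proof (induction rule: borel_measurable_induct)
  case (cong f g)
  have "space N = space M" using sets_eq_imp_space_eq[OF sN] .
  then show ?case using cong by (subst (1 2 3) nn_integral_cong[of _ f g]) auto
next
  case (set A)
  then show ?case using sN by (simp add: emeasure_add_measure)
next
  case (mult u c)
  then have "u \<in> borel_measurable N" using sN by (simp cong: measurable_cong_sets)
  with mult show ?case by (simp add: nn_integral_cmult distrib_left cong: measurable_cong_sets)
next
  case (add u v)
  then have "u \<in> borel_measurable N" "v \<in> borel_measurable N"
    using sN by (simp_all cong: measurable_cong_sets)
  with add show ?case by (simp add: nn_integral_add algebra_simps cong: measurable_cong_sets)
next
  case (seq U)
  have UN: "U i \<in> borel_measurable N" for i using seq sN by (simp cong: measurable_cong_sets)
  have "(\<integral>\<^sup>+x. (SUP i. U i x) \<partial>add_measure M N) = (SUP i. \<integral>\<^sup>+x. U i x \<partial>add_measure M N)"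
    using seq by (intro nn_integral_monotone_convergence_SUP) (auto cong: measurable_cong_sets)
  also have "\<dots> = (SUP i. (\<integral>\<^sup>+x. U i x \<partial>M) + (\<integral>\<^sup>+x. U i x \<partial>N))" using seq by simp
  also have "\<dots> = (SUP i. \<integral>\<^sup>+x. U i x \<partial>M) + (SUP i. \<integral>\<^sup>+x. U i x \<partial>N)"
    using seq by (intro ennreal_SUP_add) (auto simp: incseq_def le_fun_def intro!: nn_integral_mono)
  also have "\<dots> = (\<integral>\<^sup>+x. (SUP i. U i x) \<partial>M) + (\<integral>\<^sup>+x. (SUP i. U i x) \<partial>N)"
    using seq UN by (simp add: nn_integral_monotone_convergence_SUP)
  finally show ?case by (simp add: SUP_apply image_comp)
qed

lemma integral_add_measure:
  fixes g :: "_ \<Rightarrow> real"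
  assumes sN: "sets N = sets M" and iM: "integrable M g" and iN: "integrable N g"
  shows "integrable (add_measure M N) g"
    and "integral\<^sup>L (add_measure M N) g = integral\<^sup>L M g + integral\<^sup>L N g"
proof -
  have g: "g \<in> borel_measurable M" using iM by simp
  have bound: "(\<integral>\<^sup>+x. ennreal (h x) \<partial>K) < \<infinity>"
    if "integrable K g" "\<And>x. h x \<le> norm (g x)" for K h
    using that unfolding integrable_iff_bounded
    by (auto elim!: le_less_trans[rotated] intro!: nn_integral_mono ennreal_leI)
  note fin = bound[OF iM, of "\<lambda>x. norm (g x)"] bound[OF iN, of "\<lambda>x. norm (g x)"]
    bound[OF iM, of g] bound[OF iN, of g] bound[OF iM, of "\<lambda>x. - g x"] bound[OF iN, of "\<lambda>x. - g x"]
  show i: "integrable (add_measure M N) g"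
    unfolding integrable_iff_bounded using g sN fin(1,2)
    by (simp add: nn_integral_add_measure cong: measurable_cong_sets)
  show "integral\<^sup>L (add_measure M N) g = integral\<^sup>L M g + integral\<^sup>L N g"
    using i iM iN g sN fin(3-6)
    by (simp add: real_lebesgue_integral_def nn_integral_add_measure enn2real_plus less_top[symmetric])
qed

lemma distr_add_measure:
  assumes sN: "sets N = sets M" and g: "g \<in> measurable M K"
  shows "distr (add_measure M N) K g = add_measure (distr M K g) (distr N K g)"
proof (rule measure_eqI)
  fix A assume "A \<in> sets (distr (add_measure M N) K g)"
  moreover have "g \<in> measurable N K" using g sN by (simp cong: measurable_cong_sets)
  moreover have "space N = space M" using sets_eq_imp_space_eq[OF sN] .
  ultimately show "emeasure (distr (add_measure M N) K g) A = emeasure (add_measure (distr M K g) (distr N K g)) A"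
    using g sN by (simp add: emeasure_distr emeasure_add_measure measurable_sets cong: measurable_cong_sets)
qed simp

lemma finite_measure_add_measure:
  assumes "finite_measure M" "finite_measure N" "sets N = sets M"
  shows "finite_measure (add_measure M N)"
proof (rule finite_measureI)
  have "space N = space M" using sets_eq_imp_space_eq[OF assms(3)] .
  then show "emeasure (add_measure M N) (space (add_measure M N)) \<noteq> \<infinity>"
    using assms by (simp add: emeasure_add_measure finite_measure.emeasure_finite)
qed

lemma density_add_eq_add_measure:
  assumes "f \<in> borel_measurable M" "g \<in> borel_measurable M"
  shows "density M (\<lambda>x. f x + g x) = add_measure (density M f) (density M g)"
  using assms by (intro measure_eqI) (simp_all add: emeasure_add_measure emeasure_density_add)

lemma add_measure_cancel_right:
  assumes eq: "add_measure A C = add_measure B C" and fin: "finite_measure C"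
    and sets: "sets A = sets C" "sets B = sets C"
  shows "A = B"
proof (rule measure_eqI)
  fix X assume "X \<in> sets A"
  then have "emeasure A X + emeasure C X = emeasure B X + emeasure C X"
    using arg_cong[OF eq, of "\<lambda>M. emeasure M X"] sets by (simp add: emeasure_add_measure)
  then show "emeasure A X = emeasure B X"
    using fin by (simp add: finite_measure.emeasure_finite)
qed (use sets in simp)

lemma finite_measure_density_le_1:
  assumes "finite_measure M" and w: "w \<in> borel_measurable M" "\<And>x. w x \<le> 1"
  shows "finite_measure (density M (\<lambda>x. ennreal (w x)))"
proof (rule finite_measureI)
  have "emeasure (density M (\<lambda>x. ennreal (w x))) (space M) = (\<integral>\<^sup>+x. ennreal (w x) \<partial>M)"
    using w by (simp add: emeasure_density)
  also have "\<dots> \<le> (\<integral>\<^sup>+x. 1 \<partial>M)"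
    using w by (intro nn_integral_mono) simp
  also have "\<dots> < \<infinity>" using assms(1) by (simp add: finite_measure.emeasure_finite less_top[symmetric])
  finally show "emeasure (density M (\<lambda>x. ennreal (w x))) (space (density M (\<lambda>x. ennreal (w x)))) \<noteq> \<infinity>"
    by simp
qed

lemma density_complement_add_measure:
  assumes w: "w \<in> borel_measurable M" "\<And>x. 0 \<le> w x" "\<And>x. w x \<le> 1"
  shows "add_measure (density M (\<lambda>x. ennreal (1 - w x))) (density M (\<lambda>x. ennreal (w x))) = M"
proof -
  have "add_measure (density M (\<lambda>x. ennreal (1 - w x))) (density M (\<lambda>x. ennreal (w x)))
      = density M (\<lambda>x. ennreal (1 - w x) + ennreal (w x))"
    using w by (intro density_add_eq_add_measure[symmetric]) auto
  also have "(\<lambda>x. ennreal (1 - w x) + ennreal (w x)) = (\<lambda>_. 1)"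
    using w by (auto simp: fun_eq_iff ennreal_plus[symmetric])
  finally show ?thesis by (simp add: density_1)
qed

lemma emeasure_distr_density_le:
  assumes w: "w \<in> borel_measurable M" "\<And>x. w x \<le> t" and g: "g \<in> measurable M K" and X: "X \<in> sets K"
  shows "emeasure (distr (density M (\<lambda>x. ennreal (w x))) K g) X \<le> ennreal t * emeasure (distr M K g) X"
proof -
  have Y: "g -` X \<inter> space M \<in> sets M" using g X by (rule measurable_sets)
  have "emeasure (density M (\<lambda>x. ennreal (w x))) (g -` X \<inter> space M)
      = (\<integral>\<^sup>+x. ennreal (w x) * indicator (g -` X \<inter> space M) x \<partial>M)"
    using w Y by (simp add: emeasure_density)
  also have "\<dots> \<le> (\<integral>\<^sup>+x. ennreal t * indicator (g -` X \<inter> space M) x \<partial>M)"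
    using w by (intro nn_integral_mono) (auto split: split_indicator intro: ennreal_leI)
  also have "\<dots> = ennreal t * emeasure M (g -` X \<inter> space M)"
    using Y by (simp add: nn_integral_cmult_indicator)
  finally show ?thesis using g X by (simp add: emeasure_distr cong: measurable_cong_sets)
qed

lemma absolutely_continuous_emeasure_le:
  assumes ac: "absolutely_continuous M N" and sets: "sets N = sets M" "sets N' = sets M"
    and le: "\<And>X. X \<in> sets M \<Longrightarrow> emeasure N' X \<le> emeasure N X"
  shows "absolutely_continuous M N'"
  unfolding absolutely_continuous_def
proof
  fix X assume X: "X \<in> null_sets M"
  then have "emeasure N X = 0" using ac by (auto simp: absolutely_continuous_def)
  then have "emeasure N' X = 0" using le[OF null_setsD2[OF X]] by simp
  then show "X \<in> null_sets N'" using X sets by (simp add: null_sets_def)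
qed

lemma density_le_imp_AE_le:
  fixes a b :: "'a \<Rightarrow> real"
  assumes [measurable]: "a \<in> borel_measurable M" "b \<in> borel_measurable M"
    and b: "\<And>x. 0 \<le> b x" and fin: "(\<integral>\<^sup>+x. ennreal (b x) \<partial>M) \<noteq> \<infinity>"
    and le: "\<And>X. X \<in> sets M \<Longrightarrow>
      emeasure (density M (\<lambda>x. ennreal (a x))) X \<le> emeasure (density M (\<lambda>x. ennreal (b x))) X"
  shows "AE x in M. a x \<le> b x"
proof -
  define N where "N = {x\<in>space M. b x < a x}"
  have [measurable]: "N \<in> sets M" unfolding N_def by measurable
  have "(\<integral>\<^sup>+x. ennreal (b x) * indicator N x \<partial>M) \<le> (\<integral>\<^sup>+x. ennreal (b x) \<partial>M)"
    by (intro nn_integral_mono) (simp add: indicator_def)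
  then have finN: "(\<integral>\<^sup>+x. ennreal (b x) * indicator N x \<partial>M) \<noteq> \<infinity>"
    using fin by (auto simp: top_unique)
  have "AE x in M. ennreal (a x) * indicator N x \<le> ennreal (b x) * indicator N x"
  proof (rule ccontr)
    assume "\<not> ?thesis"
    moreover have "AE x in M. ennreal (b x) * indicator N x \<le> ennreal (a x) * indicator N x"
      by (intro AE_I2) (simp add: N_def indicator_def ennreal_leI)
    ultimately have "(\<integral>\<^sup>+x. ennreal (b x) * indicator N x \<partial>M) < (\<integral>\<^sup>+x. ennreal (a x) * indicator N x \<partial>M)"
      using finN by (intro nn_integral_less) auto
    then show False using le[of N] by (simp add: emeasure_density)
  qed
  with AE_space show ?thesis
  proof eventually_elim
    case (elim x)
    show "a x \<le> b x"
    proof (rule ccontr)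
      assume "\<not> a x \<le> b x"
      with elim have "ennreal (a x) \<le> ennreal (b x)" by (simp add: N_def)
      with \<open>\<not> a x \<le> b x\<close> b[of x] show False by (simp add: ennreal_le_iff)
    qed
  qed
qed

lemma (in sigma_finite_measure) obtain_real_density:
  assumes "finite_measure N" "absolutely_continuous M N" "sets N = sets M"
  obtains d where "d \<in> borel_measurable M" "\<And>x. 0 \<le> d x" "N = density M (\<lambda>x. ennreal (d x))"
    "AE x in M. RN_deriv M N x = ennreal (d x)"
proof -
  obtain D where D: "D \<in> borel_measurable M" "AE x in M. RN_deriv M N x = ennreal (D x)" "\<And>x. 0 \<le> D x"
    using real_RN_deriv[OF assms] by metis
  have "N = density M (RN_deriv M N)" using density_RN_deriv[OF assms(2,3)] by simp
  also have "\<dots> = density M (\<lambda>x. ennreal (D x))" using D by (intro density_cong) auto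
  finally show ?thesis using D that by blast
qed

lemma (in sigma_finite_measure) AE_density_distr_density_eq:
  assumes K: "sets K = sets M" and h: "h \<in> measurable P K"
    and g: "g \<in> borel_measurable M" "\<And>x. 0 \<le> g x" "distr P K h = density M (\<lambda>x. ennreal (g x))"
    and \<phi>: "\<phi> \<in> borel_measurable M" "\<And>x. 0 \<le> \<phi> x"
    and a: "a \<in> borel_measurable M" "\<And>x. 0 \<le> a x"
      "distr (density P (\<lambda>p. ennreal (\<phi> (h p)))) K h = density M (\<lambda>x. ennreal (a x))"
  shows "AE x in M. a x = g x * \<phi> x"
proof -
  have "density M (\<lambda>x. ennreal (a x)) = density (distr P K h) (\<lambda>x. ennreal (\<phi> x))"
    using a(3) density_distr[of "\<lambda>x. ennreal (\<phi> x)" K h P] \<phi> h K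
    by (simp cong: measurable_cong_sets)
  also have "\<dots> = density M (\<lambda>x. ennreal (g x * \<phi> x))"
    using g \<phi> by (simp add: density_density_eq ennreal_mult)
  finally have "AE x in M. ennreal (a x) = ennreal (g x * \<phi> x)"
    using a g \<phi> by (simp add: density_unique_iff)
  then show ?thesis by eventually_elim (use a(2) g(2) \<phi>(2) in simp)
qed

lemma AE_density_distr_density_le:
  assumes K: "sets K = sets M" and h: "h \<in> measurable P K"
    and g: "g \<in> borel_measurable M" "\<And>x. 0 \<le> g x" "(\<integral>\<^sup>+x. ennreal (g x) \<partial>M) \<noteq> \<infinity>"
      "distr P K h = density M (\<lambda>x. ennreal (g x))"
    and w: "w \<in> borel_measurable P" "\<And>p. w p \<le> t" "0 \<le> t"
    and a: "a \<in> borel_measurable M"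
      "distr (density P (\<lambda>p. ennreal (w p))) K h = density M (\<lambda>x. ennreal (a x))"
  shows "AE x in M. a x \<le> t * g x"
proof (rule density_le_imp_AE_le)
  show "a \<in> borel_measurable M" "(\<lambda>x. t * g x) \<in> borel_measurable M" "\<And>x. 0 \<le> t * g x"
    using a g w by auto
  show "(\<integral>\<^sup>+x. ennreal (t * g x) \<partial>M) \<noteq> \<infinity>"
    using g w by (simp add: ennreal_mult nn_integral_cmult ennreal_mult_eq_top_iff)
  fix X assume X: "X \<in> sets M"
  have "emeasure (density M (\<lambda>x. ennreal (a x))) X \<le> ennreal t * emeasure (distr P K h) X"
    using a(2) emeasure_distr_density_le[OF w(1,2) h, of X] X K by simp
  also have "\<dots> = emeasure (density M (\<lambda>x. ennreal (t * g x))) X"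
    using g w X by (simp add: emeasure_density ennreal_mult nn_integral_cmult mult.assoc)
  finally show "emeasure (density M (\<lambda>x. ennreal (a x))) X \<le> emeasure (density M (\<lambda>x. ennreal (t * g x))) X" .
qed

lemma not_AE_le_imp_level_set:
  fixes g :: "'a \<Rightarrow> real"
  assumes g: "g \<in> borel_measurable M" and not_le: "\<not> (AE x in M. g x \<le> C)"
  obtains l where "C < l" "emeasure M {x\<in>space M. l \<le> g x} \<noteq> 0"
proof -
  have "AE x in M. g x \<le> C" if null: "\<And>l. C < l \<Longrightarrow> emeasure M {x\<in>space M. l \<le> g x} = 0"
  proof -
    have "AE x in M. g x < C + inverse (real (Suc n))" for n
      using null[of "C + inverse (real (Suc n))"] g
      by (subst AE_iff_measurable[OF _ refl]) (auto simp: not_less)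
    then have "AE x in M. \<forall>n. g x < C + inverse (real (Suc n))" by (simp add: AE_all_countable)
    then show ?thesis
    proof eventually_elim
      case (elim x)
      show "g x \<le> C"
      proof (rule ccontr)
        assume "\<not> g x \<le> C"
        then obtain n where "inverse (real (Suc n)) < g x - C" using reals_Archimedean[of "g x - C"] by auto
        with elim[rule_format, of n] show False by linarith
      qed
    qed
  qed
  with not_le that show ?thesis by blast
qed

lemma not_AE_ge_imp_level_set:
  fixes g :: "'a \<Rightarrow> real"
  assumes g: "g \<in> borel_measurable M" and not_ge: "\<not> (AE x in M. C \<le> g x)"
  obtains l where "l < C" "emeasure M {x\<in>space M. g x \<le> l} \<noteq> 0"
proof -
  have "(\<lambda>x. - g x) \<in> borel_measurable M" "\<not> (AE x in M. - g x \<le> - C)"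
    using g not_ge by simp_all
  then obtain l where "- C < l" "emeasure M {x\<in>space M. l \<le> - g x} \<noteq> 0"
    by (rule not_AE_le_imp_level_set)
  moreover have "{x\<in>space M. l \<le> - g x} = {x\<in>space M. g x \<le> - l}" by auto
  ultimately show ?thesis using that[of "- l"] by auto
qed

section \<open>Entropy functions\<close>

lemma finite_entropy_function_continuous_on:
  assumes "finite_entropy_function f"
  shows "continuous_on {0..} f"
proof -
  have cvx: "convex_on {0..} f" and lsc: "lsc_nonneg f"
    using assms by (auto simp: finite_entropy_function_def)
  have "continuous_on {0<..} f"
    by (rule convex_on_continuous) (auto intro: convex_on_subset[OF cvx])
  then have pos: "isCont f x" if "0 < x" for x
    using that continuous_on_eq_continuous_at[OF open_greaterThan] by blast
  \<comment> \<open>At \<open>0\<close>, lower semicontinuity bounds \<open>f\<close> from below and convexity on \<open>[0, 1]\<close> from above.\<close>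
  have zero: "continuous (at 0 within {0..}) f"
    unfolding continuous_within_eps_delta
  proof (intro allI impI)
    fix e :: real assume e: "0 < e"
    obtain d1 where d1: "0 < d1" "\<forall>s\<ge>0. \<bar>s - 0\<bar> < d1 \<longrightarrow> f 0 - e < f s"
      using lsc[unfolded lsc_nonneg_def, rule_format, of 0 e] e by blast
    define K where "K = \<bar>f 1 - f 0\<bar> + 1"
    define d where "d = min (min d1 1) (e / K)"
    have K: "0 < K" by (simp add: K_def)
    have "dist (f s) (f 0) < e" if s: "0 \<le> s" "s < d" for s
    proof -
      have "f ((1 - s) * 0 + s * 1) \<le> (1 - s) * f 0 + s * f 1"
        using convex_onD[OF cvx, of s 0 1] s by (simp add: d_def)
      then have "f s \<le> f 0 + s * (f 1 - f 0)" by (simp add: algebra_simps)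
      also have "s * (f 1 - f 0) \<le> s * K" using s by (intro mult_left_mono) (auto simp: K_def)
      also have "s * K < e" using s K by (simp add: d_def pos_less_divide_eq)
      finally have "f s < f 0 + e" by simp
      moreover have "f 0 - e < f s" using d1 s by (simp add: d_def)
      ultimately show ?thesis by (simp add: dist_real_def abs_less_iff)
    qed
    moreover have "0 < d" using d1 e K by (simp add: d_def)
    ultimately show "\<exists>d>0. \<forall>s\<in>{0..}. dist s 0 < d \<longrightarrow> dist (f s) (f 0) < e"
      by (auto simp: dist_real_def)
  qed
  show ?thesis
    unfolding continuous_on_eq_continuous_within
  proof
    fix x :: real assume "x \<in> {0..}"
    then consider "x = 0" | "0 < x" by fastforce
    then show "continuous (at x within {0..}) f"
      by cases (use zero pos continuous_at_imp_continuous_at_within in auto)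
  qed
qed

lemma borel_measurable_finite_entropy_comp:
  assumes f: "finite_entropy_function f" and g: "g \<in> borel_measurable M" "\<And>x. 0 \<le> g x"
  shows "(\<lambda>x. f (g x)) \<in> borel_measurable M"
proof -
  have "continuous_on UNIV (\<lambda>y. f (max 0 y))"
    by (rule continuous_on_compose2[OF finite_entropy_function_continuous_on[OF f]])
      (auto intro: continuous_intros)
  then have "(\<lambda>y. f (max 0 y)) \<in> borel_measurable borel"
    by (rule borel_measurable_continuous_onI)
  then have "(\<lambda>x. f (max 0 (g x))) \<in> borel_measurable M"
    using g by measurable
  then show ?thesis using g by (simp add: max_def)
qed

lemma rel_entropy_density:
  assumes "sigma_finite_measure M" and g: "g \<in> borel_measurable M" "\<And>x. 0 \<le> g x"
  shows "rel_entropy f M (density M (\<lambda>x. ennreal (g x))) = (\<integral>\<^sup>+x. ennreal (f (g x)) \<partial>M)"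
proof -
  interpret sigma_finite_measure M by fact
  have "AE x in M. ennreal (g x) = RN_deriv M (density M (\<lambda>x. ennreal (g x))) x"
    using g by (intro RN_deriv_unique) auto
  then have "AE x in M. ennreal (f (enn2real (RN_deriv M (density M (\<lambda>x. ennreal (g x))) x)))
      = ennreal (f (g x))"
    by eventually_elim (metis enn2real_ennreal g(2))
  moreover have "absolutely_continuous M (density M (\<lambda>x. ennreal (g x)))"
    using g by (intro absolutely_continuousI_density) auto
  ultimately show ?thesis unfolding rel_entropy_def by (simp add: nn_integral_cong_AE)
qed

lemma rel_entropy_bounded_density_finite:
  assumes f: "finite_entropy_function f" and "finite_measure M"
    and g: "g \<in> borel_measurable M" "\<And>x. 0 \<le> g x" "AE x in M. g x \<le> C"
  shows "rel_entropy f M (density M (\<lambda>x. ennreal (g x))) \<noteq> \<infinity>"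
proof -
  interpret finite_measure M by fact
  have "compact (f ` {0..C})"
    using finite_entropy_function_continuous_on[OF f]
    by (intro compact_continuous_image) (auto elim: continuous_on_subset)
  then obtain K where "\<forall>z \<in> f ` {0..C}. norm z \<le> K"
    using compact_imp_bounded bounded_iff by blast
  then have K: "norm (f y) \<le> K" if "y \<in> {0..C}" for y
    using that by blast
  have "rel_entropy f M (density M (\<lambda>x. ennreal (g x))) = (\<integral>\<^sup>+x. ennreal (f (g x)) \<partial>M)"
    using g sigma_finite_measure_axioms by (intro rel_entropy_density)
  also have "\<dots> \<le> (\<integral>\<^sup>+x. ennreal K \<partial>M)"
  proof (rule nn_integral_mono_AE)
    show "AE x in M. ennreal (f (g x)) \<le> ennreal K"
      using g(3)
    proof eventually_elim
      case (elim x)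
      then have "norm (f (g x)) \<le> K" using g(2) by (intro K) auto
      then show ?case by (intro ennreal_leI) auto
    qed
  qed
  also have "\<dots> = ennreal K * emeasure M (space M)" by simp
  also have "\<dots> < \<infinity>"
    using emeasure_finite[of "space M"] by (simp add: ennreal_mult_eq_top_iff less_top[symmetric])
  finally show ?thesis by simp
qed

section \<open>Rerouting transport plans\<close>

lemma borel_measurable_fst:
  "fst \<in> borel_measurable (borel :: ('a::topological_space \<times> 'b::topological_space) measure)"
  by (intro borel_measurable_continuous_onI continuous_intros)

lemma borel_measurable_snd:
  "snd \<in> borel_measurable (borel :: ('a::topological_space \<times> 'b::topological_space) measure)"
  by (intro borel_measurable_continuous_onI continuous_intros)

lemma OT_cost_le_coupling: "\<pi> \<in> couplings \<mu> \<nu> \<Longrightarrow> OT_cost c \<mu> \<nu> \<le> ereal (integral\<^sup>L \<pi> c)"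
  unfolding OT_cost_def by (rule INF_lower)

lemma coupling_self: "sets \<pi> = sets borel \<Longrightarrow> finite_measure \<pi> \<Longrightarrow>
    \<pi> \<in> couplings (distr \<pi> borel fst) (distr \<pi> borel snd)"
  by (simp add: couplings_def)

lemma add_measure_couplings:
  assumes "\<pi>1 \<in> couplings \<mu>1 \<nu>1" "\<pi>2 \<in> couplings \<mu>2 \<nu>2"
  shows "add_measure \<pi>1 \<pi>2 \<in> couplings (add_measure \<mu>1 \<mu>2) (add_measure \<nu>1 \<nu>2)"
proof -
  have "fst \<in> measurable \<pi>1 borel" "snd \<in> measurable \<pi>1 borel"
    using assms(1) borel_measurable_fst borel_measurable_snd
    by (auto simp: couplings_def cong: measurable_cong_sets)
  then show ?thesis
    using assms by (auto simp: couplings_def distr_add_measure intro: finite_measure_add_measure)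
qed

lemma Mplus_distr:
  assumes "finite_measure M" "h \<in> measurable M borel"
  shows "distr M borel h \<in> Mplus"
  using finite_measure.finite_measure_distr[OF assms] by (simp add: Mplus_def)

locale transport_cost =
  fixes c :: "'a::metric_space \<times> 'a \<Rightarrow> real"
  assumes compact_space: "compact (UNIV :: 'a set)"
    and continuous_cost: "continuous_on UNIV c"
    and OT_cost_nonneg: "\<forall>\<mu>\<in>Mplus. \<forall>\<nu>\<in>Mplus. 0 \<le> OT_cost c \<mu> \<nu>"
    and OT_cost_diag: "\<forall>\<mu>\<in>Mplus. OT_cost c \<mu> \<mu> = 0"
begin

lemma integrable_cost:
  assumes "finite_measure M" "sets M = sets borel"
  shows "integrable M c"
proof -
  interpret finite_measure M by fact
  have "compact (range c)"
    using compact_Times[OF compact_space compact_space] continuous_cost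
    by (intro compact_continuous_image) auto
  then obtain B where "\<forall>z\<in>range c. norm z \<le> B"
    using compact_imp_bounded bounded_iff by blast
  moreover have "c \<in> borel_measurable M"
    using borel_measurable_continuous_onI[OF continuous_cost] assms(2)
    by (simp cong: measurable_cong_sets)
  ultimately show ?thesis by (intro integrable_const_bound[where B=B]) auto
qed

text \<open>Keep the part \<open>(1 - w) \<pi>\<close> of the plan and replace the part \<open>w \<pi>\<close> by an almost free
  self-coupling of its first marginal; the cost of \<open>w \<pi>\<close> was nonnegative.\<close>
lemma OT_cost_reroute_le:
  assumes \<pi>: "\<pi> \<in> couplings \<mu> \<nu>"
    and w: "w \<in> borel_measurable borel" "\<And>p. 0 \<le> w p" "\<And>p. w p \<le> 1"
  shows "OT_cost c \<mu> (add_measure (distr (density \<pi> (\<lambda>p. ennreal (1 - w p))) borel snd)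
                                   (distr (density \<pi> (\<lambda>p. ennreal (w p))) borel fst))
         \<le> ereal (integral\<^sup>L \<pi> c)"
proof (rule ereal_le_epsilon2)
  fix \<epsilon> :: real assume \<epsilon>: "0 < \<epsilon>"
  have s\<pi>: "sets \<pi> = sets borel" and fin\<pi>: "finite_measure \<pi>" and \<mu>: "distr \<pi> borel fst = \<mu>"
    using \<pi> by (auto simp: couplings_def)
  define \<pi>w where "\<pi>w = density \<pi> (\<lambda>p. ennreal (w p))"
  define \<pi>r where "\<pi>r = density \<pi> (\<lambda>p. ennreal (1 - w p))"
  define \<mu>w where "\<mu>w = distr \<pi>w borel fst"
  have w\<pi>: "w \<in> borel_measurable \<pi>" using w s\<pi> by (simp cong: measurable_cong_sets)
  have sets: "sets \<pi>w = sets borel" "sets \<pi>r = sets borel" using s\<pi> by (auto simp: \<pi>w_def \<pi>r_def)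
  have fin: "finite_measure \<pi>w" "finite_measure \<pi>r"
    unfolding \<pi>w_def \<pi>r_def using fin\<pi> w\<pi> w by (auto intro!: finite_measure_density_le_1)
  have split: "add_measure \<pi>r \<pi>w = \<pi>"
    unfolding \<pi>r_def \<pi>w_def using w\<pi> w(2,3) by (rule density_complement_add_measure)
  have \<pi>w: "\<pi>w \<in> couplings \<mu>w (distr \<pi>w borel snd)" and \<pi>r: "\<pi>r \<in> couplings (distr \<pi>r borel fst) (distr \<pi>r borel snd)"
    using sets fin by (simp_all add: coupling_self \<mu>w_def)
  have marginals: "\<mu>w \<in> Mplus" "distr \<pi>w borel snd \<in> Mplus"
    unfolding \<mu>w_def using fin(1) sets(1) borel_measurable_fst borel_measurable_snd
    by (auto intro!: Mplus_distr cong: measurable_cong_sets)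
  then have "0 \<le> OT_cost c \<mu>w (distr \<pi>w borel snd)" using OT_cost_nonneg by blast
  also have "\<dots> \<le> ereal (integral\<^sup>L \<pi>w c)" using \<pi>w by (rule OT_cost_le_coupling)
  finally have cost_w: "0 \<le> integral\<^sup>L \<pi>w c" by simp
  have "OT_cost c \<mu>w \<mu>w < ereal \<epsilon>" using OT_cost_diag marginals(1) \<epsilon> by simp
  then obtain \<tau> where \<tau>: "\<tau> \<in> couplings \<mu>w \<mu>w" "integral\<^sup>L \<tau> c < \<epsilon>"
    unfolding OT_cost_def INF_less_iff by auto
  have "add_measure (distr \<pi>r borel fst) \<mu>w = distr (add_measure \<pi>r \<pi>w) borel fst"
    unfolding \<mu>w_def using sets borel_measurable_fst
    by (intro distr_add_measure[symmetric]) (simp_all cong: measurable_cong_sets)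
  then have "add_measure \<pi>r \<tau> \<in> couplings \<mu> (add_measure (distr \<pi>r borel snd) \<mu>w)"
    using add_measure_couplings[OF \<pi>r \<tau>(1)] split \<mu> by simp
  then have "OT_cost c \<mu> (add_measure (distr \<pi>r borel snd) \<mu>w) \<le> ereal (integral\<^sup>L (add_measure \<pi>r \<tau>) c)"
    by (rule OT_cost_le_coupling)
  also have "integral\<^sup>L (add_measure \<pi>r \<tau>) c = integral\<^sup>L \<pi>r c + integral\<^sup>L \<tau> c"
    using \<tau>(1) sets fin by (intro integral_add_measure integrable_cost) (auto simp: couplings_def)
  also have "integral\<^sup>L \<pi> c = integral\<^sup>L \<pi>r c + integral\<^sup>L \<pi>w c"
    unfolding split[symmetric] using sets fin by (intro integral_add_measure integrable_cost) auto
  ultimately show "OT_cost c \<mu> (add_measure (distr (density \<pi> (\<lambda>p. ennreal (1 - w p))) borel snd)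
      (distr (density \<pi> (\<lambda>p. ennreal (w p))) borel fst)) \<le> ereal (integral\<^sup>L \<pi> c) + ereal \<epsilon>"
    using cost_w \<tau>(2) unfolding \<pi>r_def \<pi>w_def \<mu>w_def by (simp add: order_trans)
qed

lemma minimizer_finite_value:
  assumes \<mu>: "\<mu> \<in> Mplus" and \<nu>: "\<nu> \<in> Mplus"
    and minimal: "OT_cost c \<mu> \<nu> + enn2ereal (rel_entropy f m \<nu>) \<le> OT_cost c \<mu> \<mu> + enn2ereal (rel_entropy f m \<mu>)"
    and finite: "rel_entropy f m \<mu> \<noteq> \<infinity>"
  shows "OT_cost c \<mu> \<nu> < \<infinity>" "rel_entropy f m \<nu> \<noteq> \<infinity>"
proof -
  have "OT_cost c \<mu> \<nu> + enn2ereal (rel_entropy f m \<nu>) \<le> enn2ereal (rel_entropy f m \<mu>)"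
    using minimal OT_cost_diag \<mu> by simp
  also have "\<dots> < \<infinity>" using finite by (simp add: less_top[symmetric])
  finally have "OT_cost c \<mu> \<nu> + enn2ereal (rel_entropy f m \<nu>) < \<infinity>" .
  moreover have "0 \<le> OT_cost c \<mu> \<nu>" using OT_cost_nonneg \<mu> \<nu> by blast
  ultimately show "OT_cost c \<mu> \<nu> < \<infinity>" "rel_entropy f m \<nu> \<noteq> \<infinity>"
    using enn2ereal_nonneg[of "rel_entropy f m \<nu>"]
    by (cases "OT_cost c \<mu> \<nu>"; cases "enn2ereal (rel_entropy f m \<nu>)"; auto)+
qed

end

section \<open>First variation at the minimizer\<close>

locale entropic_minimizer = transport_cost c for c :: "'a::metric_space \<times> 'a \<Rightarrow> real" +
  fixes f :: "real \<Rightarrow> real" and m \<mu> \<nu> :: "'a measure" and \<rho>\<mu> \<rho> :: "'a \<Rightarrow> real"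
  assumes entropy: "finite_entropy_function f"
    and m: "m \<in> Mplus" and \<mu>: "\<mu> \<in> Mplus" and \<nu>: "\<nu> \<in> Mplus"
    and minimal: "\<forall>\<nu>'\<in>Mplus. OT_cost c \<mu> \<nu> + enn2ereal (rel_entropy f m \<nu>)
                               \<le> OT_cost c \<mu> \<nu>' + enn2ereal (rel_entropy f m \<nu>')"
    and density_\<mu>: "\<rho>\<mu> \<in> borel_measurable m" "\<And>x. 0 \<le> \<rho>\<mu> x" "\<mu> = density m (\<lambda>x. ennreal (\<rho>\<mu> x))"
    and density_\<nu>: "\<rho> \<in> borel_measurable m" "\<And>x. 0 \<le> \<rho> x" "\<nu> = density m (\<lambda>x. ennreal (\<rho> x))"
    and finite_value: "OT_cost c \<mu> \<nu> < \<infinity>" "rel_entropy f m \<nu> \<noteq> \<infinity>"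
begin

sublocale m: finite_measure m
  using m by (simp add: Mplus_def)

lemma sets_m [simp, measurable_cong]: "sets m = sets borel"
  using m by (simp add: Mplus_def)

lemma space_m [simp]: "space m = UNIV"
  using sets_eq_imp_space_eq[OF sets_m] by simp

lemma nn_integral_density_finite:
  assumes "N \<in> Mplus" "N = density m (\<lambda>x. ennreal (g x))" "g \<in> borel_measurable m"
  shows "(\<integral>\<^sup>+x. ennreal (g x) \<partial>m) \<noteq> \<infinity>"
proof -
  have "(\<integral>\<^sup>+x. ennreal (g x) \<partial>m) = emeasure N (space N)"
    using assms by (simp add: emeasure_density)
  then show ?thesis
    using assms(1) by (simp add: Mplus_def finite_measure.emeasure_finite)
qed

lemma integrable_density_\<nu>: "integrable m \<rho>"
  using nn_integral_density_finite[OF \<nu> density_\<nu>(3,1)] density_\<nu>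
  by (intro integrableI_nonneg) (auto simp: less_top)

lemma entropy_\<nu>:
  shows "integrable m (\<lambda>x. f (\<rho> x))"
    and "rel_entropy f m \<nu> = ennreal (\<integral>x. f (\<rho> x) \<partial>m)"
proof -
  have eq: "rel_entropy f m \<nu> = (\<integral>\<^sup>+x. ennreal (f (\<rho> x)) \<partial>m)"
    unfolding density_\<nu>(3) using density_\<nu> m.sigma_finite_measure_axioms by (intro rel_entropy_density)
  have f0: "0 \<le> f (\<rho> x)" for x
    using entropy density_\<nu>(2) by (simp add: finite_entropy_function_def)
  have meas: "(\<lambda>x. f (\<rho> x)) \<in> borel_measurable m"
    using borel_measurable_finite_entropy_comp[OF entropy density_\<nu>(1,2)] .
  show int: "integrable m (\<lambda>x. f (\<rho> x))"
    using finite_value(2) eq meas f0 by (intro integrableI_nonneg) (auto simp: less_top)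
  show "rel_entropy f m \<nu> = ennreal (\<integral>x. f (\<rho> x) \<partial>m)"
    unfolding eq using int f0 by (intro nn_integral_eq_integral) auto
qed

lemma reroute_marginal_densities:
  assumes \<pi>: "\<pi> \<in> couplings \<mu> \<nu>"
    and w: "w \<in> borel_measurable borel" "\<And>p. 0 \<le> w p" "\<And>p. w p \<le> 1"
  obtains a b where "a \<in> borel_measurable m" "\<And>x. 0 \<le> a x" "b \<in> borel_measurable m" "\<And>x. 0 \<le> b x"
    "distr (density \<pi> (\<lambda>p. ennreal (w p))) borel fst = density m (\<lambda>x. ennreal (a x))"
    "distr (density \<pi> (\<lambda>p. ennreal (w p))) borel snd = density m (\<lambda>x. ennreal (b x))"
proof -
  have s\<pi>: "sets \<pi> = sets borel" and fin\<pi>: "finite_measure \<pi>" using \<pi> by (auto simp: couplings_def)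
  have w\<pi>: "w \<in> borel_measurable \<pi>" using w(1) s\<pi> by (simp cong: measurable_cong_sets)
  have fin: "finite_measure (density \<pi> (\<lambda>p. ennreal (w p)))"
    using fin\<pi> w\<pi> w(3) by (rule finite_measure_density_le_1)
  have density: "\<exists>d. d \<in> borel_measurable m \<and> (\<forall>x. 0 \<le> d x) \<and>
      distr (density \<pi> (\<lambda>p. ennreal (w p))) borel h = density m (\<lambda>x. ennreal (d x))"
    if h: "h \<in> borel_measurable borel" and N: "distr \<pi> borel h = density m (\<lambda>x. ennreal (g x))"
      "g \<in> borel_measurable m"
    for h :: "'a \<times> 'a \<Rightarrow> 'a" and g
  proof -
    have h\<pi>: "h \<in> measurable \<pi> borel" using h s\<pi> by (simp cong: measurable_cong_sets)
    have fin_h: "finite_measure (distr (density \<pi> (\<lambda>p. ennreal (w p))) borel h)"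
      using h\<pi> by (intro finite_measure.finite_measure_distr[OF fin]) (simp cong: measurable_cong_sets)
    have "absolutely_continuous m (distr (density \<pi> (\<lambda>p. ennreal (w p))) borel h)"
    proof (rule absolutely_continuous_emeasure_le)
      show "absolutely_continuous m (distr \<pi> borel h)"
        unfolding N using N(2) by (intro absolutely_continuousI_density) auto
      fix X assume "X \<in> sets m"
      then show "emeasure (distr (density \<pi> (\<lambda>p. ennreal (w p))) borel h) X \<le> emeasure (distr \<pi> borel h) X"
        using emeasure_distr_density_le[OF w\<pi> w(3) h\<pi>, of X] by simp
    qed simp_all
    then obtain d where "d \<in> borel_measurable m" "\<And>x. 0 \<le> d x"
      "distr (density \<pi> (\<lambda>p. ennreal (w p))) borel h = density m (\<lambda>x. ennreal (d x))"
      using m.obtain_real_density[OF fin_h] by auto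
    then show ?thesis by blast
  qed
  obtain a where "a \<in> borel_measurable m" "\<forall>x. 0 \<le> a x"
    "distr (density \<pi> (\<lambda>p. ennreal (w p))) borel fst = density m (\<lambda>x. ennreal (a x))"
    using density[OF borel_measurable_fst _ density_\<mu>(1)] \<pi> density_\<mu>(3) by (auto simp: couplings_def)
  moreover obtain b where "b \<in> borel_measurable m" "\<forall>x. 0 \<le> b x"
    "distr (density \<pi> (\<lambda>p. ennreal (w p))) borel snd = density m (\<lambda>x. ennreal (b x))"
    using density[OF borel_measurable_snd _ density_\<nu>(1)] \<pi> density_\<nu>(3) by (auto simp: couplings_def)
  ultimately show ?thesis using that by blast
qed

context
  fixes \<pi> :: "('a \<times> 'a) measure" and w :: "'a \<times> 'a \<Rightarrow> real" and a b :: "'a \<Rightarrow> real"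
  assumes plan: "\<pi> \<in> couplings \<mu> \<nu>"
    and weight: "w \<in> borel_measurable borel" "\<And>p. 0 \<le> w p" "\<And>p. w p \<le> 1"
    and density_a: "a \<in> borel_measurable m" "\<And>x. 0 \<le> a x"
      "distr (density \<pi> (\<lambda>p. ennreal (w p))) borel fst = density m (\<lambda>x. ennreal (a x))"
    and density_b: "b \<in> borel_measurable m" "\<And>x. 0 \<le> b x"
      "distr (density \<pi> (\<lambda>p. ennreal (w p))) borel snd = density m (\<lambda>x. ennreal (b x))"
begin

lemma sets_plan: "sets \<pi> = sets borel"
  using plan by (simp add: couplings_def)

lemma weight_measurable: "w \<in> borel_measurable \<pi>"
  using weight(1) sets_plan by (simp cong: measurable_cong_sets)

lemma finite_measure_weighted_plans:
  "finite_measure (density \<pi> (\<lambda>p. ennreal (w p)))" "finite_measure (density \<pi> (\<lambda>p. ennreal (1 - w p)))"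
  using plan weight weight_measurable
  by (auto simp: couplings_def intro!: finite_measure_density_le_1)

lemma rerouted_density_le: "AE x in m. b x \<le> \<rho> x"
proof -
  have "AE x in m. b x \<le> 1 * \<rho> x"
  proof (rule AE_density_distr_density_le[OF _ _ density_\<nu>(1,2) _ _ weight_measurable weight(3)
        _ density_b(1,3)])
    show "snd \<in> measurable \<pi> borel"
      using sets_plan borel_measurable_snd by (simp cong: measurable_cong_sets)
    show "(\<integral>\<^sup>+x. ennreal (\<rho> x) \<partial>m) \<noteq> \<infinity>"
      by (rule nn_integral_density_finite[OF \<nu> density_\<nu>(3,1)])
    show "distr \<pi> borel snd = density m (\<lambda>x. ennreal (\<rho> x))"
      using plan density_\<nu>(3) by (simp add: couplings_def)
  qed simp_all
  then show ?thesis by simp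
qed

text \<open>The truncation \<open>max 0\<close> only matters on the null set where \<open>b > \<rho>\<close>.\<close>
lemma rerouted_measure_density:
  "add_measure (distr (density \<pi> (\<lambda>p. ennreal (1 - w p))) borel snd)
               (distr (density \<pi> (\<lambda>p. ennreal (w p))) borel fst)
   = density m (\<lambda>x. ennreal (max 0 (\<rho> x - b x) + a x))"
proof -
  define \<nu>r where "\<nu>r = distr (density \<pi> (\<lambda>p. ennreal (1 - w p))) borel snd"
  have snd: "snd \<in> measurable \<pi> borel" "snd \<in> measurable (density \<pi> g) borel" for g
    using sets_plan borel_measurable_snd by (simp_all cong: measurable_cong_sets)
  have "add_measure \<nu>r (density m (\<lambda>x. ennreal (b x))) = distr \<pi> borel snd"
    unfolding \<nu>r_def density_b(3)[symmetric]
    by (subst (3) density_complement_add_measure[OF weight_measurable weight(2,3), symmetric])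
      (rule distr_add_measure[symmetric]; simp add: snd)
  also have "\<dots> = \<nu>"
    using plan by (simp add: couplings_def)
  also have "\<dots> = density m (\<lambda>x. ennreal (max 0 (\<rho> x - b x)) + ennreal (b x))"
  proof -
    have "AE x in m. ennreal (\<rho> x) = ennreal (max 0 (\<rho> x - b x)) + ennreal (b x)"
      using rerouted_density_le by eventually_elim (use density_b(2) in \<open>simp add: ennreal_plus[symmetric]\<close>)
    then show ?thesis
      unfolding density_\<nu>(3) using density_\<nu>(1) density_b(1) by (intro density_cong) auto
  qed
  also have "\<dots> = add_measure (density m (\<lambda>x. ennreal (max 0 (\<rho> x - b x)))) (density m (\<lambda>x. ennreal (b x)))"
    using density_\<nu>(1) density_b(1) by (intro density_add_eq_add_measure) auto
  finally have "\<nu>r = density m (\<lambda>x. ennreal (max 0 (\<rho> x - b x)))"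
  proof (rule add_measure_cancel_right)
    show "finite_measure (density m (\<lambda>x. ennreal (b x)))"
      unfolding density_b(3)[symmetric] using finite_measure_weighted_plans(1) snd(2)
      by (rule finite_measure.finite_measure_distr)
  qed (simp_all add: \<nu>r_def)
  then show ?thesis
    unfolding \<nu>r_def[symmetric] density_a(3)
    using density_\<nu>(1) density_b(1) density_a(1,2)
    by (simp add: density_add_eq_add_measure ennreal_plus)
qed

lemma reroute_value_le:
  "OT_cost c \<mu> \<nu> + enn2ereal (rel_entropy f m \<nu>)
     \<le> ereal (integral\<^sup>L \<pi> c) + enn2ereal (\<integral>\<^sup>+x. ennreal (f (\<rho> x - b x + a x)) \<partial>m)"
proof -
  let ?\<nu>' = "add_measure (distr (density \<pi> (\<lambda>p. ennreal (1 - w p))) borel snd)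
                          (distr (density \<pi> (\<lambda>p. ennreal (w p))) borel fst)"
  have proj: "fst \<in> measurable (density \<pi> g) borel" "snd \<in> measurable (density \<pi> g) borel" for g
    using sets_plan borel_measurable_fst borel_measurable_snd by (simp_all cong: measurable_cong_sets)
  have "?\<nu>' \<in> Mplus"
    using finite_measure_weighted_plans proj
    by (auto simp: Mplus_def intro!: finite_measure_add_measure finite_measure.finite_measure_distr)
  then have "OT_cost c \<mu> \<nu> + enn2ereal (rel_entropy f m \<nu>) \<le> OT_cost c \<mu> ?\<nu>' + enn2ereal (rel_entropy f m ?\<nu>')"
    using minimal by blast
  also have "rel_entropy f m ?\<nu>' = (\<integral>\<^sup>+x. ennreal (f (max 0 (\<rho> x - b x) + a x)) \<partial>m)"
    unfolding rerouted_measure_density using density_\<nu>(1) density_b(1) density_a(1,2)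
    by (intro rel_entropy_density m.sigma_finite_measure_axioms) (auto intro: add_nonneg_nonneg)
  also have "\<dots> = (\<integral>\<^sup>+x. ennreal (f (\<rho> x - b x + a x)) \<partial>m)"
    using rerouted_density_le by (intro nn_integral_cong_AE) (auto simp: max_def)
  finally show ?thesis
    using OT_cost_reroute_le[OF plan weight] by (auto intro: order_trans add_right_mono)
qed

lemma reroute_masses_eq:
  shows "integrable m a" "integrable m b" "integral\<^sup>L m a = integral\<^sup>L m b"
proof -
  have mass: "(\<integral>\<^sup>+x. ennreal (d x) \<partial>m) = emeasure (density \<pi> (\<lambda>p. ennreal (w p))) (space \<pi>)"
    if "d \<in> borel_measurable m" "distr (density \<pi> (\<lambda>p. ennreal (w p))) borel h = density m (\<lambda>x. ennreal (d x))"
      "h \<in> borel_measurable borel" for d and h :: "'a \<times> 'a \<Rightarrow> 'a"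
  proof -
    have "h \<in> measurable (density \<pi> (\<lambda>p. ennreal (w p))) borel"
      using that(3) sets_plan by (simp cong: measurable_cong_sets)
    then show ?thesis
      using arg_cong[OF that(2), of "\<lambda>M. emeasure M UNIV"] that(1) by (simp add: emeasure_density emeasure_distr)
  qed
  have finite: "emeasure (density \<pi> (\<lambda>p. ennreal (w p))) (space \<pi>) < \<infinity>"
    using finite_measure.emeasure_finite[OF finite_measure_weighted_plans(1)] by (simp add: less_top)
  show ia: "integrable m a" and ib: "integrable m b"
    using mass[OF density_a(1,3) borel_measurable_fst] mass[OF density_b(1,3) borel_measurable_snd]
      finite density_a(1,2) density_b(1,2) by (auto intro!: integrableI_nonneg)
  have "ennreal (integral\<^sup>L m a) = ennreal (integral\<^sup>L m b)"
    using mass[OF density_a(1,3) borel_measurable_fst] mass[OF density_b(1,3) borel_measurable_snd]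
      nn_integral_eq_integral[OF ia] nn_integral_eq_integral[OF ib] density_a(2) density_b(2) by simp
  then show "integral\<^sup>L m a = integral\<^sup>L m b"
    using density_a(2) density_b(2) by (simp add: integral_nonneg_AE)
qed

lemma reroute_entropy_le:
  assumes e: "integrable m e"
    and bound: "AE x in m. f (\<rho> x - b x + a x) \<le> f (\<rho> x) + \<kappa> * (a x - b x) + e x"
  shows "enn2ereal (\<integral>\<^sup>+x. ennreal (f (\<rho> x - b x + a x)) \<partial>m)
    \<le> ereal (integral\<^sup>L m (\<lambda>x. f (\<rho> x)) + integral\<^sup>L m e)"
proof -
  define R where "R x = f (\<rho> x) + \<kappa> * (a x - b x) + e x" for x
  have R: "integrable m R" "integral\<^sup>L m R = integral\<^sup>L m (\<lambda>x. f (\<rho> x)) + integral\<^sup>L m e"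
    unfolding R_def[abs_def] using entropy_\<nu>(1) reroute_masses_eq e by auto
  have pointwise: "AE x in m. 0 \<le> f (\<rho> x - b x + a x) \<and> f (\<rho> x - b x + a x) \<le> R x"
    using rerouted_density_le bound
    by eventually_elim (use entropy density_a(2) in \<open>auto simp: R_def finite_entropy_function_def\<close>)
  then have "0 \<le> integral\<^sup>L m R"
    by (intro integral_nonneg_AE) (auto elim: eventually_mono)
  moreover have "(\<integral>\<^sup>+x. ennreal (f (\<rho> x - b x + a x)) \<partial>m) \<le> (\<integral>\<^sup>+x. ennreal (R x) \<partial>m)"
    using pointwise by (intro nn_integral_mono_AE) (auto intro: ennreal_leI elim: eventually_mono)
  moreover have "(\<integral>\<^sup>+x. ennreal (R x) \<partial>m) = ennreal (integral\<^sup>L m R)"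
    using pointwise R(1) by (intro nn_integral_eq_integral) (auto elim: eventually_mono)
  ultimately show ?thesis using R(2) by (simp add: less_eq_ennreal.rep_eq)
qed

end

text \<open>The rerouted measure is an admissible competitor, and \<open>\<kappa> (a - b)\<close> integrates to zero
  because \<open>a\<close> and \<open>b\<close> are the densities of the two marginals of the same measure \<open>w \<pi>\<close>.\<close>
lemma reroute_variational_inequality:
  assumes weight: "w \<in> borel_measurable borel" "\<And>p. 0 \<le> w p" "\<And>p. w p \<le> 1"
    and e: "integrable m e"
    and bound: "\<And>\<pi> a b. \<pi> \<in> couplings \<mu> \<nu> \<Longrightarrow>
      a \<in> borel_measurable m \<Longrightarrow> (\<And>x. 0 \<le> a x) \<Longrightarrow> b \<in> borel_measurable m \<Longrightarrow> (\<And>x. 0 \<le> b x) \<Longrightarrow>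
      distr (density \<pi> (\<lambda>p. ennreal (w p))) borel fst = density m (\<lambda>x. ennreal (a x)) \<Longrightarrow>
      distr (density \<pi> (\<lambda>p. ennreal (w p))) borel snd = density m (\<lambda>x. ennreal (b x)) \<Longrightarrow>
      AE x in m. f (\<rho> x - b x + a x) \<le> f (\<rho> x) + \<kappa> * (a x - b x) + e x"
  shows "0 \<le> integral\<^sup>L m e"
proof (rule ccontr)
  assume "\<not> 0 \<le> integral\<^sup>L m e"
  obtain T where T: "OT_cost c \<mu> \<nu> = ereal T"
    using finite_value(1) OT_cost_nonneg \<mu> \<nu> by (cases "OT_cost c \<mu> \<nu>") auto
  with \<open>\<not> 0 \<le> integral\<^sup>L m e\<close> have "OT_cost c \<mu> \<nu> < ereal (T - integral\<^sup>L m e)" by simp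
  then obtain \<pi> where \<pi>: "\<pi> \<in> couplings \<mu> \<nu>" "integral\<^sup>L \<pi> c < T - integral\<^sup>L m e"
    unfolding OT_cost_def INF_less_iff by auto
  obtain a b where a: "a \<in> borel_measurable m" "\<And>x. 0 \<le> a x"
    "distr (density \<pi> (\<lambda>p. ennreal (w p))) borel fst = density m (\<lambda>x. ennreal (a x))"
    and b: "b \<in> borel_measurable m" "\<And>x. 0 \<le> b x"
    "distr (density \<pi> (\<lambda>p. ennreal (w p))) borel snd = density m (\<lambda>x. ennreal (b x))"
    using reroute_marginal_densities[OF \<pi>(1) weight] by metis
  note reroute = \<pi>(1) weight a b
  have "OT_cost c \<mu> \<nu> + enn2ereal (rel_entropy f m \<nu>)
      \<le> ereal (integral\<^sup>L \<pi> c) + enn2ereal (\<integral>\<^sup>+x. ennreal (f (\<rho> x - b x + a x)) \<partial>m)"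
    by (rule reroute_value_le[OF reroute])
  also have "\<dots> \<le> ereal (integral\<^sup>L \<pi> c) + ereal (integral\<^sup>L m (\<lambda>x. f (\<rho> x)) + integral\<^sup>L m e)"
    using reroute_entropy_le[OF reroute e bound[OF \<pi>(1) a(1,2) b(1,2) a(3) b(3)]]
    by (rule add_left_mono)
  finally have "OT_cost c \<mu> \<nu> + enn2ereal (rel_entropy f m \<nu>)
    \<le> ereal (integral\<^sup>L \<pi> c) + ereal (integral\<^sup>L m (\<lambda>x. f (\<rho> x)) + integral\<^sup>L m e)" .
  moreover have "0 \<le> integral\<^sup>L m (\<lambda>x. f (\<rho> x))"
    using entropy density_\<nu>(2) by (intro integral_nonneg_AE) (simp add: finite_entropy_function_def)
  ultimately show False
    using T \<pi>(2) entropy_\<nu>(2) by simp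
qed

end

section \<open>Density bounds\<close>

context entropic_minimizer
begin

lemma coupling_projections:
  assumes "\<pi> \<in> couplings \<mu> \<nu>"
  shows "fst \<in> measurable \<pi> borel" "snd \<in> measurable \<pi> borel"
    and "distr \<pi> borel fst = density m (\<lambda>x. ennreal (\<rho>\<mu> x))"
    and "distr \<pi> borel snd = density m (\<lambda>x. ennreal (\<rho> x))"
  using assms borel_measurable_fst borel_measurable_snd density_\<mu>(3) density_\<nu>(3)
  by (auto simp: couplings_def cong: measurable_cong_sets)

lemma reroute_marginals_target_weight:
  assumes \<pi>: "\<pi> \<in> couplings \<mu> \<nu>" and \<phi>: "\<phi> \<in> borel_measurable m" "\<And>y. 0 \<le> \<phi> y" "\<And>y. \<phi> y \<le> t"
    and a: "a \<in> borel_measurable m"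
      "distr (density \<pi> (\<lambda>p. ennreal (\<phi> (snd p)))) borel fst = density m (\<lambda>x. ennreal (a x))"
    and b: "b \<in> borel_measurable m" "\<And>x. 0 \<le> b x"
      "distr (density \<pi> (\<lambda>p. ennreal (\<phi> (snd p)))) borel snd = density m (\<lambda>x. ennreal (b x))"
  shows "AE x in m. a x \<le> t * \<rho>\<mu> x \<and> b x = \<rho> x * \<phi> x"
proof -
  note proj = coupling_projections[OF \<pi>]
  have "(\<lambda>p. \<phi> (snd p)) \<in> borel_measurable \<pi>"
    using \<phi>(1) by (intro measurable_compose[OF proj(2)]) (simp cong: measurable_cong_sets)
  then have "AE x in m. a x \<le> t * \<rho>\<mu> x"
    using \<phi>(2,3) order_trans[OF \<phi>(2,3)]
    by (intro AE_density_distr_density_le[OF _ proj(1) density_\<mu>(1,2)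
        nn_integral_density_finite[OF \<mu> density_\<mu>(3,1)] proj(3) _ _ _ a]) auto
  moreover have "AE x in m. b x = \<rho> x * \<phi> x"
    by (rule m.AE_density_distr_density_eq[OF _ proj(2) density_\<nu>(1,2) proj(4) \<phi>(1,2) b]) simp
  ultimately show ?thesis by eventually_elim simp
qed

lemma reroute_marginals_source_weight:
  assumes \<pi>: "\<pi> \<in> couplings \<mu> \<nu>" and \<phi>: "\<phi> \<in> borel_measurable m" "\<And>y. 0 \<le> \<phi> y" "\<And>y. \<phi> y \<le> t"
    and a: "a \<in> borel_measurable m" "\<And>x. 0 \<le> a x"
      "distr (density \<pi> (\<lambda>p. ennreal (\<phi> (fst p)))) borel fst = density m (\<lambda>x. ennreal (a x))"
    and b: "b \<in> borel_measurable m"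
      "distr (density \<pi> (\<lambda>p. ennreal (\<phi> (fst p)))) borel snd = density m (\<lambda>x. ennreal (b x))"
  shows "AE x in m. a x = \<rho>\<mu> x * \<phi> x \<and> b x \<le> t * \<rho> x"
proof -
  note proj = coupling_projections[OF \<pi>]
  have "(\<lambda>p. \<phi> (fst p)) \<in> borel_measurable \<pi>"
    using \<phi>(1) by (intro measurable_compose[OF proj(1)]) (simp cong: measurable_cong_sets)
  then have "AE x in m. b x \<le> t * \<rho> x"
    using \<phi>(2,3) order_trans[OF \<phi>(2,3)]
    by (intro AE_density_distr_density_le[OF _ proj(2) density_\<nu>(1,2)
        nn_integral_density_finite[OF \<nu> density_\<nu>(3,1)] proj(4) _ _ _ b]) auto
  moreover have "AE x in m. a x = \<rho>\<mu> x * \<phi> x"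
    by (rule m.AE_density_distr_density_eq[OF _ proj(1) density_\<mu>(1,2) proj(3) \<phi>(1,2) a]) simp
  ultimately show ?thesis by eventually_elim simp
qed

lemma integrable_indicator_m: "A \<in> sets m \<Longrightarrow> integrable m (indicator A :: 'a \<Rightarrow> real)"
  by (simp add: less_top[symmetric])

text \<open>The weight returns to their sources the fraction \<open>t\<close> of the mass that a plan sends to
  points where \<open>\<rho> > L\<close>; at the sources the density of \<open>\<mu>\<close> is at most \<open>C\<close>.\<close>
lemma reroute_from_above:
  assumes t: "0 < t" "t < 1" and bound_\<mu>: "AE x in m. \<rho>\<mu> x \<le> C"
    and pointwise: "\<And>r a. 0 \<le> r \<Longrightarrow> 0 \<le> a \<Longrightarrow> a \<le> t * C \<Longrightarrow>
      f (r - t * r * of_bool (L < r) + a) \<le> f r + k * (a - t * r * of_bool (L < r))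
        + t * (\<eta> * r - G * of_bool (l \<le> r))"
  shows "G * measure m {x. l \<le> \<rho> x} \<le> \<eta> * integral\<^sup>L m \<rho>"
proof -
  define S where "S = {x. l \<le> \<rho> x}"
  define \<phi> where "\<phi> y = t * indicator {y. L < \<rho> y} y" for y
  define e where "e x = t * (\<eta> * \<rho> x - G * indicator S x)" for x
  have S: "S \<in> sets m" using density_\<nu>(1) by (simp add: S_def)
  have \<phi>: "\<phi> \<in> borel_measurable m" "\<And>y. 0 \<le> \<phi> y" "\<And>y. \<phi> y \<le> t"
    using t density_\<nu>(1) unfolding \<phi>_def[abs_def] by (auto simp: indicator_def)
  have "0 \<le> integral\<^sup>L m e"
  proof (rule reroute_variational_inequality[where \<kappa> = k])
    show "(\<lambda>p. \<phi> (snd p)) \<in> borel_measurable borel"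
      using \<phi>(1) by (intro measurable_compose[OF borel_measurable_snd]) (simp cong: measurable_cong_sets)
    show "\<And>p. 0 \<le> \<phi> (snd p)" "\<And>p. \<phi> (snd p) \<le> 1"
      using \<phi>(2) order_trans[OF \<phi>(3) less_imp_le[OF t(2)]] by auto
    show "integrable m e"
      unfolding e_def[abs_def] using integrable_density_\<nu> integrable_indicator_m[OF S] by simp
    fix \<pi> a b
    assume "\<pi> \<in> couplings \<mu> \<nu>" "a \<in> borel_measurable m" "\<And>x. 0 \<le> a x"
      "b \<in> borel_measurable m" "\<And>x. 0 \<le> b x"
      "distr (density \<pi> (\<lambda>p. ennreal (\<phi> (snd p)))) borel fst = density m (\<lambda>x. ennreal (a x))"
      "distr (density \<pi> (\<lambda>p. ennreal (\<phi> (snd p)))) borel snd = density m (\<lambda>x. ennreal (b x))"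
    note marginals = reroute_marginals_target_weight[OF this(1) \<phi> this(2,6,4,5,7)]
    show "AE x in m. f (\<rho> x - b x + a x) \<le> f (\<rho> x) + k * (a x - b x) + e x"
      using marginals bound_\<mu>
    proof eventually_elim
      case (elim x)
      have "a x \<le> t * C" using elim mult_left_mono[OF elim(2), of t] t by linarith
      then show ?case
        using pointwise[of "\<rho> x" "a x"] density_\<nu>(2)[of x] \<open>\<And>x. 0 \<le> a x\<close>[of x] elim(1)
        by (simp add: \<phi>_def e_def S_def indicator_def algebra_simps)
    qed
  qed
  also have "integral\<^sup>L m e = t * (\<eta> * integral\<^sup>L m \<rho> - G * measure m S)"
    unfolding e_def[abs_def] using integrable_density_\<nu> integrable_indicator_m S
    by (simp add: algebra_simps)
  finally show ?thesis using t by (simp add: S_def zero_le_mult_iff)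
qed

text \<open>The weight keeps at its source the fraction \<open>t\<close> of the mass that a plan moves away from
  points where \<open>\<rho> < L\<close>; there the density of \<open>\<mu>\<close> lies between \<open>C0\<close> and \<open>C1\<close>.\<close>
lemma reroute_from_below:
  assumes t: "0 < t" "t < 1" and bound_\<mu>: "AE x in m. C0 \<le> \<rho>\<mu> x \<and> \<rho>\<mu> x \<le> C1"
    and pointwise: "\<And>r q b. 0 \<le> r \<Longrightarrow> C0 \<le> q \<Longrightarrow> q \<le> C1 \<Longrightarrow> 0 \<le> b \<Longrightarrow> b \<le> t * r \<Longrightarrow>
      f (r - b + t * q * of_bool (r < L)) \<le> f r + s * (t * q * of_bool (r < L) - b)
        + t * (\<eta> * C1 - G * of_bool (r \<le> l))"
  shows "G * measure m {x. \<rho> x \<le> l} \<le> \<eta> * C1 * measure m (space m)"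
proof -
  define S where "S = {x. \<rho> x \<le> l}"
  define \<phi> where "\<phi> y = t * indicator {y. \<rho> y < L} y" for y
  define e where "e x = t * (\<eta> * C1 - G * indicator S x)" for x
  have S: "S \<in> sets m" using density_\<nu>(1) by (simp add: S_def)
  have \<phi>: "\<phi> \<in> borel_measurable m" "\<And>y. 0 \<le> \<phi> y" "\<And>y. \<phi> y \<le> t"
    using t density_\<nu>(1) unfolding \<phi>_def[abs_def] by (auto simp: indicator_def)
  have "0 \<le> integral\<^sup>L m e"
  proof (rule reroute_variational_inequality[where \<kappa> = s])
    show "(\<lambda>p. \<phi> (fst p)) \<in> borel_measurable borel"
      using \<phi>(1) by (intro measurable_compose[OF borel_measurable_fst]) (simp cong: measurable_cong_sets)
    show "\<And>p. 0 \<le> \<phi> (fst p)" "\<And>p. \<phi> (fst p) \<le> 1"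
      using \<phi>(2) order_trans[OF \<phi>(3) less_imp_le[OF t(2)]] by auto
    show "integrable m e"
      unfolding e_def[abs_def] using integrable_indicator_m[OF S] by simp
    fix \<pi> a b
    assume "\<pi> \<in> couplings \<mu> \<nu>" "a \<in> borel_measurable m" "\<And>x. 0 \<le> a x"
      "b \<in> borel_measurable m" "\<And>x. 0 \<le> b x"
      "distr (density \<pi> (\<lambda>p. ennreal (\<phi> (fst p)))) borel fst = density m (\<lambda>x. ennreal (a x))"
      "distr (density \<pi> (\<lambda>p. ennreal (\<phi> (fst p)))) borel snd = density m (\<lambda>x. ennreal (b x))"
    note marginals = reroute_marginals_source_weight[OF this(1) \<phi> this(2,3,6,4,7)]
    show "AE x in m. f (\<rho> x - b x + a x) \<le> f (\<rho> x) + s * (a x - b x) + e x"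
      using marginals bound_\<mu>
    proof eventually_elim
      case (elim x)
      then show ?case
        using pointwise[of "\<rho> x" "\<rho>\<mu> x" "b x"] density_\<nu>(2)[of x] \<open>\<And>x. 0 \<le> b x\<close>[of x]
        by (simp add: \<phi>_def e_def S_def indicator_def algebra_simps)
    qed
  qed
  also have "integral\<^sup>L m e = t * (\<eta> * C1 * measure m (space m) - G * measure m S)"
    unfolding e_def[abs_def] using integrable_indicator_m S by (simp add: algebra_simps)
  finally show ?thesis using t by (simp add: S_def zero_le_mult_iff)
qed

lemma AE_density_le:
  assumes strict: "strict_convex_on {0..} f" and C: "0 < C" and bound_\<mu>: "AE x in m. \<rho>\<mu> x \<le> C"
  shows "AE x in m. \<rho> x \<le> C"
proof (rule ccontr)
  assume "\<not> ?thesis"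
  then obtain l where l: "C < l" "emeasure m {x. l \<le> \<rho> x} \<noteq> 0"
    using not_AE_le_imp_level_set[OF density_\<nu>(1)] by auto
  then have S: "0 < measure m {x. l \<le> \<rho> x}"
    by (simp add: m.emeasure_eq_measure zero_less_measure_iff)
  obtain \<Gamma> where \<Gamma>: "0 < \<Gamma>" and estimate: "\<forall>\<eta>>0. \<exists>L t k. 0 < t \<and> t < 1 \<and>
    (\<forall>r a. 0 \<le> r \<longrightarrow> 0 \<le> a \<longrightarrow> a \<le> t * C \<longrightarrow>
      f (r - t * r * of_bool (L < r) + a) \<le> f r + k * (a - t * r * of_bool (L < r))
        + t * (\<eta> * r - \<Gamma> * (l - C) * of_bool (l \<le> r)))"
    using strict_convex_reroute_estimate_above[OF _ strict C l(1)] entropy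
    by (auto simp: finite_entropy_function_def)
  define P where "P = \<Gamma> * (l - C) * measure m {x. l \<le> \<rho> x}"
  define \<eta> where "\<eta> = P / (integral\<^sup>L m \<rho> + 1)"
  have "0 < P" using \<Gamma> l S by (simp add: P_def)
  moreover have "0 \<le> integral\<^sup>L m \<rho>" using density_\<nu>(2) by (simp add: integral_nonneg_AE)
  ultimately have \<eta>: "0 < \<eta>" "\<eta> * integral\<^sup>L m \<rho> < P" by (auto simp: \<eta>_def field_simps)
  with estimate obtain L t k where "0 < t" "t < 1" "\<And>r a. 0 \<le> r \<Longrightarrow> 0 \<le> a \<Longrightarrow> a \<le> t * C \<Longrightarrow>
      f (r - t * r * of_bool (L < r) + a) \<le> f r + k * (a - t * r * of_bool (L < r))
        + t * (\<eta> * r - \<Gamma> * (l - C) * of_bool (l \<le> r))"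
    by blast
  from reroute_from_above[OF this(1,2) bound_\<mu> this(3)] show False
    using \<eta>(2) by (simp add: P_def mult.assoc)
qed

lemma AE_density_ge:
  assumes strict: "strict_convex_on {0..} f" and C1: "0 < C1"
    and bound_\<mu>: "AE x in m. C0 \<le> \<rho>\<mu> x \<and> \<rho>\<mu> x \<le> C1"
  shows "AE x in m. C0 \<le> \<rho> x"
proof (rule ccontr)
  assume "\<not> ?thesis"
  then obtain l where l: "l < C0" "emeasure m {x. \<rho> x \<le> l} \<noteq> 0"
    using not_AE_ge_imp_level_set[OF density_\<nu>(1)] by auto
  then have S: "0 < measure m {x. \<rho> x \<le> l}"
    by (simp add: m.emeasure_eq_measure zero_less_measure_iff)
  have "0 \<le> l"
  proof (rule ccontr)
    assume "\<not> 0 \<le> l"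
    then have "{x. \<rho> x \<le> l} = {}" using density_\<nu>(2) by (auto intro: order_trans)
    then show False using S by simp
  qed
  obtain \<Gamma> where \<Gamma>: "0 < \<Gamma>" and estimate: "\<forall>\<eta>>0. \<exists>L t s. 0 < t \<and> t < 1 \<and>
    (\<forall>r q b. 0 \<le> r \<longrightarrow> C0 \<le> q \<longrightarrow> q \<le> C1 \<longrightarrow> 0 \<le> b \<longrightarrow> b \<le> t * r \<longrightarrow>
      f (r - b + t * q * of_bool (r < L)) \<le> f r + s * (t * q * of_bool (r < L) - b)
        + t * (\<eta> * C1 - \<Gamma> * (C0 - l) * of_bool (r \<le> l)))"
    using strict_convex_reroute_estimate_below[OF _ strict \<open>0 \<le> l\<close> l(1) C1] entropy
    by (auto simp: finite_entropy_function_def)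
  define P where "P = \<Gamma> * (C0 - l) * measure m {x. \<rho> x \<le> l}"
  define V where "V = C1 * measure m (space m)"
  define \<eta> where "\<eta> = P / (V + 1)"
  have "0 < P" using \<Gamma> l S by (simp add: P_def)
  moreover have "0 \<le> V" using C1 by (simp add: V_def)
  ultimately have \<eta>: "0 < \<eta>" "\<eta> * V < P" by (auto simp: \<eta>_def field_simps)
  with estimate obtain L t s where "0 < t" "t < 1" "\<And>r q b. 0 \<le> r \<Longrightarrow> C0 \<le> q \<Longrightarrow> q \<le> C1 \<Longrightarrow>
      0 \<le> b \<Longrightarrow> b \<le> t * r \<Longrightarrow>
      f (r - b + t * q * of_bool (r < L)) \<le> f r + s * (t * q * of_bool (r < L) - b)
        + t * (\<eta> * C1 - \<Gamma> * (C0 - l) * of_bool (r \<le> l))"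
    by blast
  from reroute_from_below[OF this(1,2) bound_\<mu> this(3)] show False
    using \<eta>(2) by (simp add: P_def V_def mult.assoc)
qed

end

theorem corollary3p24:
  fixes c :: "'a::metric_space \<times> 'a \<Rightarrow> real"
    and f :: "real \<Rightarrow> real"
    and m \<mu> \<nu> :: "'a measure"
    and C0 C1 :: real
  assumes compact: "compact (UNIV :: 'a set)"
    and c_cont: "continuous_on UNIV c"
    and T_nonneg: "\<forall>\<mu>\<in>Mplus. \<forall>\<nu>\<in>Mplus. 0 \<le> OT_cost c \<mu> \<nu>"
    and T_diag: "\<forall>\<mu>\<in>Mplus. OT_cost c \<mu> \<mu> = 0"
    and f_entropy: "finite_entropy_function f"
    and f_strict: "strict_convex_on {0..} f"
    and m: "m \<in> Mplus" "emeasure m UNIV \<noteq> 0"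
    and \<mu>: "\<mu> \<in> Mplus"
    and \<nu>: "\<nu> \<in> Mplus"
    and \<nu>_min: "\<forall>\<nu>'\<in>Mplus. OT_cost c \<mu> \<nu> + enn2ereal (rel_entropy f m \<nu>)
                          \<le> OT_cost c \<mu> \<nu>' + enn2ereal (rel_entropy f m \<nu>')"
    and C: "0 < C0" "0 < C1"
    and \<mu>_ac: "absolutely_continuous m \<mu>"
    and \<mu>_bounds: "AE x in m. ennreal C0 \<le> RN_deriv m \<mu> x \<and> RN_deriv m \<mu> x \<le> ennreal C1"
  shows "absolutely_continuous m \<nu> \<and>
         (AE x in m. ennreal C0 \<le> RN_deriv m \<nu> x \<and> RN_deriv m \<nu> x \<le> ennreal C1)"
proof -
  interpret transport_cost c
    using compact c_cont T_nonneg T_diag by unfold_locales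
  interpret m: finite_measure m
    using m(1) by (simp add: Mplus_def)
  have sets: "sets \<mu> = sets m" "sets \<nu> = sets m" "finite_measure \<mu>" "finite_measure \<nu>"
    using m(1) \<mu> \<nu> by (auto simp: Mplus_def)
  obtain \<rho>\<mu> where \<rho>\<mu>: "\<rho>\<mu> \<in> borel_measurable m" "\<And>x. 0 \<le> \<rho>\<mu> x" "\<mu> = density m (\<lambda>x. ennreal (\<rho>\<mu> x))"
    and RN_\<mu>: "AE x in m. RN_deriv m \<mu> x = ennreal (\<rho>\<mu> x)"
    using m.obtain_real_density[OF sets(3) \<mu>_ac sets(1)] by metis
  have bounds: "AE x in m. C0 \<le> \<rho>\<mu> x \<and> \<rho>\<mu> x \<le> C1"
    using \<mu>_bounds RN_\<mu> by eventually_elim (use \<rho>\<mu>(2) C in auto)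
  have "rel_entropy f m \<mu> \<noteq> \<infinity>"
    using rel_entropy_bounded_density_finite[OF f_entropy m.finite_measure_axioms \<rho>\<mu>(1,2), of C1]
      bounds \<rho>\<mu>(3) by (auto elim: eventually_mono)
  then have finite: "OT_cost c \<mu> \<nu> < \<infinity>" "rel_entropy f m \<nu> \<noteq> \<infinity>"
    using minimizer_finite_value[OF \<mu> \<nu> \<nu>_min[rule_format, OF \<mu>]] by auto
  then have \<nu>_ac: "absolutely_continuous m \<nu>"
    by (auto simp: rel_entropy_def split: if_splits)
  obtain \<rho> where \<rho>: "\<rho> \<in> borel_measurable m" "\<And>x. 0 \<le> \<rho> x" "\<nu> = density m (\<lambda>x. ennreal (\<rho> x))"
    and RN_\<nu>: "AE x in m. RN_deriv m \<nu> x = ennreal (\<rho> x)"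
    using m.obtain_real_density[OF sets(4) \<nu>_ac sets(2)] by metis
  interpret entropic_minimizer c f m \<mu> \<nu> \<rho>\<mu> \<rho>
    using f_entropy m(1) \<mu> \<nu> \<nu>_min \<rho>\<mu> \<rho> finite by unfold_locales auto
  have "AE x in m. \<rho> x \<le> C1"
    using AE_density_le[OF f_strict C(2)] bounds by (auto elim: eventually_mono)
  moreover have "AE x in m. C0 \<le> \<rho> x"
    by (rule AE_density_ge[OF f_strict C(2) bounds])
  ultimately have "AE x in m. ennreal C0 \<le> RN_deriv m \<nu> x \<and> RN_deriv m \<nu> x \<le> ennreal C1"
    using RN_\<nu> by eventually_elim (auto intro: ennreal_leI)
  with \<nu>_ac show ?thesis by simp
qed

end
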